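(* Let $n\ge2$ and $1\le m,k\le n$. Then $\mathcal{H}_n(m,k)=\mathcal{L}_n(p,p,\ldots,p)$ ($k$ entries) where $0\le p\le n-1$, $p\equiv k-m-1 \pmod n$. Consequently the natural HNN extension $\widehat{H}_n(m,k)$ of $H_n(m,k)$ is isomorphic to the LOG group of the LOG $\Gamma(n;(a_{m-k+1})^k)$ (subscript mod $n$), i.e. the group with presentation \[\langle a_1,\ldots,a_n,t_0,\ldots,t_{k-1}\mid a_{i+1}=t_0^{-1}a_it_0\ (1\le i\le n,\ a_{n+1}=a_1),\ t_{j+1}=a_{m-k+1}^{-1}t_ja_{m-k+1}\ (0\le j\le k-1,\ t_k=a_1)\rangle.\]
   Context: $\mathcal{H}_n(m,k)=\langle x_1,\ldots,x_n\mid x_ix_{i+m}=x_{i+k}\ (1\le i\le n)\rangle$ (subscripts mod $n$) defines the group $H_n(m,k)$; this is the cyclic presentation $\mathcal{G}_n(x_1x_{1+m}x_{1+k}^{-1})$. For $0\le p_0,\ldots,p_{r-1}\le n-1$ and $p_r=-1$, $\mathcal{L}_n(p_0,\ldots,p_{r-1})$ denotes the cyclic presentation $\mathcal{G}_n\big((x_{p_0}x_{p_1+1}\cdots x_{p_{r-1}+(r-1)}x_{p_r+r})(x_{p_0+1}x_{p_1+2}\cdots x_{p_{r-1}+r})^{-1}\big)$, where $\mathcal{G}_n(w)=\langle x_1,\ldots,x_n\mid w,\theta(w),\ldots,\theta^{n-1}(w)\rangle$ with $\theta(x_i)=x_{i+1}$ (subscripts mod $n$). The natural HNN extension of a cyclically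 presented group $G_n(w)$ is $G_n(w)\rtimes_\phi\mathbb{Z}$ where $\phi(x_i)=x_{i+1}$. A LOG group is the group of a LOG presentation $\langle V\mid \tau(e)=\lambda(e)^{-1}\iota(e)\lambda(e)\ (e\in E)\rangle$ of a labelled oriented graph. *)

theory Defs
  imports "HOL-Algebra.Group"
begin

text \<open>A word over generators of type 'a is a list of letters (x, e);
  e = True means the letter x, e = False means the letter x^-1.\<close>

type_synonym 'a word = "('a \<times> bool) list"

definition words :: "'a set \<Rightarrow> 'a word set" where
  "words X = lists (X \<times> UNIV)"

definition inv_word :: "'a word \<Rightarrow> 'a word" where
  "inv_word w = rev (map (\<lambda>(x, e). (x, \<not> e)) w)"

definition pres_step :: "'a set \<Rightarrow> 'a word set \<Rightarrow> ('a word \<times> 'a word) set" where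
  "pres_step X R = {(a @ b, a @ s @ b) | a b s.
      a @ b \<in> words X \<and> s \<in> words X \<and>
      (s \<in> R \<or> (\<exists>x\<in>X. \<exists>e. s = [(x, e), (x, \<not> e)]))}"

definition pres_eq :: "'a set \<Rightarrow> 'a word set \<Rightarrow> ('a word \<times> 'a word) set" where
  "pres_eq X R = (pres_step X R \<union> (pres_step X R)\<inverse>)\<^sup>* \<inter> (words X \<times> words X)"

definition pres_group :: "'a set \<Rightarrow> 'a word set \<Rightarrow> 'a word set monoid" where
  "pres_group X R =
     \<lparr> carrier = words X // pres_eq X R,
       mult = (\<lambda>A B. \<Union>a\<in>A. \<Union>b\<in>B. pres_eq X R `` {a @ b}),
       one = pres_eq X R `` {[]} \<rparr>"

text \<open>Generators x_1,...,x_n are represented by 0,...,n-1 (subscripts mod n,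
  so x_n is represented by 0). idx n z is the representative of z mod n.\<close>

definition idx :: "nat \<Rightarrow> int \<Rightarrow> nat" where
  "idx n z = nat (z mod int n)"

definition shift_word :: "nat \<Rightarrow> int \<Rightarrow> nat word \<Rightarrow> nat word" where
  "shift_word n j w = map (\<lambda>(i, e). (idx n (int i + j), e)) w"

text \<open>G_n(w) = \<langle>x_1..x_n | w, \<theta>(w), ..., \<theta>^(n-1)(w)\<rangle>\<close>

definition cyc_group :: "nat \<Rightarrow> nat word \<Rightarrow> nat word set monoid" where
  "cyc_group n w = pres_group {..<n} {shift_word n (int j) w | j. j < n}"

definition H_word :: "nat \<Rightarrow> int \<Rightarrow> int \<Rightarrow> nat word" where
  "H_word n m k = [(idx n 1, True), (idx n (1 + m), True), (idx n (1 + k), False)]"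

definition H_group :: "nat \<Rightarrow> int \<Rightarrow> int \<Rightarrow> nat word set monoid" where
  "H_group n m k = cyc_group n (H_word n m k)"

text \<open>Relator of L_n(p_0,...,p_(r-1)) with p_r = -1:
  (x_(p_0) x_(p_1+1) ... x_(p_(r-1)+(r-1)) x_(p_r+r)) (x_(p_0+1) ... x_(p_(r-1)+r))^-1.\<close>

definition L_word :: "nat \<Rightarrow> int list \<Rightarrow> nat word" where
  "L_word n ps =
     (let r = length ps; q = ps @ [-1] in
      map (\<lambda>j. (idx n (q ! j + int j), True)) [0..<r+1]
      @ inv_word (map (\<lambda>j. (idx n (ps ! j + int j + 1), True)) [0..<r]))"

definition L_group :: "nat \<Rightarrow> int list \<Rightarrow> nat word set monoid" where
  "L_group n ps = cyc_group n (L_word n ps)"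

text \<open>Semidirect product G \<rtimes> Z for an action \<phi> :: int \<Rightarrow> (G \<Rightarrow> G)
  (\<phi> a = \<phi>^a), with multiplication (g,a)(h,b) = (g \<phi>^a(h), a+b).\<close>

definition semidirect_int :: "('g, 'm) monoid_scheme \<Rightarrow> (int \<Rightarrow> 'g \<Rightarrow> 'g) \<Rightarrow> ('g \<times> int) monoid" where
  "semidirect_int G \<phi> =
     \<lparr> carrier = carrier G \<times> UNIV,
       mult = (\<lambda>(g, a) (h, b). (g \<otimes>\<^bsub>G\<^esub> \<phi> a h, a + b)),
       one = (\<one>\<^bsub>G\<^esub>, 0) \<rparr>"

text \<open>The shift automorphism \<phi>(x_i) = x_(i+1), and its powers \<phi>^a,
  acting on elements (equivalence classes of words) of G_n(w).\<close>

definition cyc_shift :: "nat \<Rightarrow> nat word \<Rightarrow> int \<Rightarrow> nat word set \<Rightarrow> nat word set" where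
  "cyc_shift n w a A =
     (\<Union>v\<in>A. pres_eq {..<n} {shift_word n (int j) w | j. j < n} `` {shift_word n a v})"

definition cyc_hnn :: "nat \<Rightarrow> nat word \<Rightarrow> (nat word set \<times> int) monoid" where
  "cyc_hnn n w = semidirect_int (cyc_group n w) (cyc_shift n w)"

text \<open>LOG presentation \<langle>V | \<tau>(e) = \<lambda>(e)^-1 \<iota>(e) \<lambda>(e) (e \<in> E)\<rangle>,
  written with relators \<lambda>(e)^-1 \<iota>(e) \<lambda>(e) \<tau>(e)^-1.\<close>

definition LOG_group :: "'v set \<Rightarrow> 'e set \<Rightarrow> ('e \<Rightarrow> 'v) \<Rightarrow> ('e \<Rightarrow> 'v) \<Rightarrow> ('e \<Rightarrow> 'v)
    \<Rightarrow> 'v word set monoid" where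
  "LOG_group V E src tgt lab =
     pres_group V {[(lab e, False), (src e, True), (lab e, True), (tgt e, False)] | e. e \<in> E}"

text \<open>Vertices: a_i = Inl (i mod n) (i = 1..n) and
  t_j = Inr j (0 \<le> j \<le> k-1).  Edges: Inl i : a_i \<rightarrow> a_(i+1) labelled t_0,
  Inr j : t_j \<rightarrow> t_(j+1) labelled a_(m-k+1), with t_k = a_1.\<close>

definition Gamma_V :: "nat \<Rightarrow> nat \<Rightarrow> (nat + nat) set" where
  "Gamma_V n k = Inl ` {..<n} \<union> Inr ` {..<k}"

definition Gamma_E :: "nat \<Rightarrow> nat \<Rightarrow> (nat + nat) set" where
  "Gamma_E n k = Inl ` {..<n} \<union> Inr ` {..<k}"

definition Gamma_init :: "nat \<Rightarrow> nat + nat \<Rightarrow> nat + nat" where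
  "Gamma_init n e = (case e of Inl i \<Rightarrow> Inl i | Inr j \<Rightarrow> Inr j)"

definition Gamma_term :: "nat \<Rightarrow> nat \<Rightarrow> nat + nat \<Rightarrow> nat + nat" where
  "Gamma_term n k e = (case e of Inl i \<Rightarrow> Inl (idx n (int i + 1))
                         | Inr j \<Rightarrow> (if j + 1 < k then Inr (j + 1) else Inl (idx n 1)))"

definition Gamma_label :: "nat \<Rightarrow> int \<Rightarrow> int \<Rightarrow> nat + nat \<Rightarrow> nat + nat" where
  "Gamma_label n m k e = (case e of Inl i \<Rightarrow> Inr 0 | Inr j \<Rightarrow> Inl (idx n (m - k + 1)))"

definition Gamma_LOG_group :: "nat \<Rightarrow> int \<Rightarrow> nat \<Rightarrow> (nat + nat) word set monoid" where
  "Gamma_LOG_group n m k =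
     LOG_group (Gamma_V n k) (Gamma_E n k) (Gamma_init n) (Gamma_term n k) (Gamma_label n m (int k))"

end

theory Submission
  imports Defs
begin

text \<open>Both isomorphisms are written down on generators and checked with von Dyck's theorem.
  For \<open>H\<^sub>n(m,k) \<cong> L\<^sub>n(p,\<dots>,p)\<close> the substitution \<open>y\<^sub>z = x\<^bsub>z-k+1\<^esub>\<inverse> x\<^bsub>z-k+2\<^esub>\<close> makes every
  product \<open>y\<^bsub>p+z\<^esub> \<cdots> y\<^bsub>p+z+k-1\<^esub>\<close> telescope to \<open>x\<^bsub>z-m\<^esub>\<inverse> x\<^bsub>z-m+k\<^esub>\<close> (this is where
  \<open>p \<equiv> k - m - 1\<close> enters), which equals \<open>x\<^sub>z\<close> by the relation \<open>x\<^sub>a x\<^bsub>a+m\<^esub> = x\<^bsub>a+k\<^esub>\<close>;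
  hence the relators of either presentation map to relators of the other.
  In the HNN extension, generated by the \<open>x\<^sub>z\<close> and \<open>t\<close> with \<open>t\<inverse> x\<^bsub>z+1\<^esub> t = x\<^sub>z\<close>, the
  elements \<open>x\<^bsub>-i\<^esub>\<inverse> t x\<^bsub>-i\<^esub>\<close> are conjugated into each other by \<open>t\<close>, and the \<open>k\<close>-th power
  of the one for \<open>i = m-k+1\<close> conjugates \<open>t\<close> into the one for \<open>i = 1\<close>: these are the LOG
  relations, and \<open>x\<^sub>z \<mapsto> a\<^bsub>m-z\<^esub>\<^sup>k t\<^sub>0\<^sup>-\<^sup>k\<close>, \<open>t \<mapsto> t\<^sub>0\<close> is an inverse.\<close>

section \<open>Groups given by presentations\<close>

lemma words_Nil [simp]: "[] \<in> words X"
  by (simp add: words_def)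

lemma words_Cons [simp]: "x # w \<in> words X \<longleftrightarrow> fst x \<in> X \<and> w \<in> words X"
  by (cases x) (auto simp: words_def)

lemma words_append [simp]: "u @ v \<in> words X \<longleftrightarrow> u \<in> words X \<and> v \<in> words X"
  by (simp add: words_def)

lemma inv_word_Nil [simp]: "inv_word [] = []"
  by (simp add: inv_word_def)

lemma inv_word_Cons [simp]: "inv_word ((x, e) # w) = inv_word w @ [(x, \<not> e)]"
  by (simp add: inv_word_def)

lemma inv_word_append [simp]: "inv_word (u @ v) = inv_word v @ inv_word u"
  by (simp add: inv_word_def)

lemma inv_word_words [simp]: "inv_word w \<in> words X \<longleftrightarrow> w \<in> words X"
  by (induction w) auto

abbreviation pres_move :: "'a set \<Rightarrow> 'a word set \<Rightarrow> ('a word \<times> 'a word) set" where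
  "pres_move X R \<equiv> pres_step X R \<union> (pres_step X R)\<inverse>"

lemma pres_step_context:
  assumes "(u, v) \<in> pres_step X R" "c \<in> words X" "d \<in> words X"
  shows "(c @ u @ d, c @ v @ d) \<in> pres_step X R"
proof -
  from assms(1) obtain a b s where "u = a @ b" "v = a @ s @ b" "a @ b \<in> words X" "s \<in> words X"
    "s \<in> R \<or> (\<exists>x\<in>X. \<exists>e. s = [(x, e), (x, \<not> e)])"
    by (auto simp: pres_step_def)
  with assms(2,3) show ?thesis
    unfolding pres_step_def by (intro CollectI exI[of _ "c @ a"] exI[of _ "b @ d"] exI[of _ s]) auto
qed

lemma pres_eq_equiv: "equiv (words X) (pres_eq X R)"
proof (rule equivI)
  have "(pres_move X R)\<inverse> = pres_move X R"
    by auto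
  then show "sym (pres_eq X R)"
    unfolding pres_eq_def sym_def by (metis Int_iff converse_iff mem_Sigma_iff rtrancl_converse)
qed (auto simp: pres_eq_def refl_on_def trans_def)

lemma pres_eq_refl: "w \<in> words X \<Longrightarrow> (w, w) \<in> pres_eq X R"
  by (simp add: pres_eq_def)

lemma pres_eq_trans: "(u, v) \<in> pres_eq X R \<Longrightarrow> (v, w) \<in> pres_eq X R \<Longrightarrow> (u, w) \<in> pres_eq X R"
  by (auto simp: pres_eq_def)

lemma pres_eq_context:
  assumes "(u, v) \<in> pres_eq X R" "c \<in> words X" "d \<in> words X"
  shows "(c @ u @ d, c @ v @ d) \<in> pres_eq X R"
proof -
  have "(u, v) \<in> (pres_move X R)\<^sup>*"
    using assms(1) by (simp add: pres_eq_def)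
  then have "(c @ u @ d, c @ v @ d) \<in> (pres_move X R)\<^sup>*"
  proof (induction rule: rtrancl_induct)
    case (step y z)
    then have "(c @ y @ d, c @ z @ d) \<in> pres_move X R"
      using pres_step_context assms(2,3) by blast
    with step.IH show ?case
      by (rule rtrancl_into_rtrancl)
  qed simp
  with assms show ?thesis
    by (simp add: pres_eq_def)
qed

lemma pres_eq_append:
  assumes "(u, u') \<in> pres_eq X R" "(v, v') \<in> pres_eq X R"
  shows "(u @ v, u' @ v') \<in> pres_eq X R"
proof -
  have words: "u \<in> words X" "u' \<in> words X" "v \<in> words X" "v' \<in> words X"
    using assms by (auto simp: pres_eq_def)
  have "(u @ v, u' @ v) \<in> pres_eq X R"
    using pres_eq_context[OF assms(1), of "[]" v] words by simp
  moreover have "(u' @ v, u' @ v') \<in> pres_eq X R"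
    using pres_eq_context[OF assms(2), of u' "[]"] words by simp
  ultimately show ?thesis
    by (rule pres_eq_trans)
qed

lemma pres_eq_insert:
  assumes "s \<in> words X" "s \<in> R \<or> (\<exists>x\<in>X. \<exists>e. s = [(x, e), (x, \<not> e)])"
  shows "(s, []) \<in> pres_eq X R"
proof -
  have "([] @ [], [] @ s @ []) \<in> pres_step X R"
    using assms unfolding pres_step_def by (intro CollectI exI[of _ "[]"] exI[of _ s]) auto
  with assms(1) show ?thesis
    unfolding pres_eq_def by auto
qed

lemma pres_eq_cancel_pair: "x \<in> X \<Longrightarrow> ([(x, e), (x, \<not> e)], []) \<in> pres_eq X R"
  by (rule pres_eq_insert) auto

lemma pres_eq_relator: "r \<in> R \<Longrightarrow> r \<in> words X \<Longrightarrow> (r, []) \<in> pres_eq X R"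
  by (rule pres_eq_insert) auto

lemma pres_eq_inv_word: "w \<in> words X \<Longrightarrow> (inv_word w @ w, []) \<in> pres_eq X R"
proof (induction w rule: rev_induct)
  case (snoc a w)
  obtain x e where a: "a = (x, e)"
    by (cases a)
  with snoc.prems have x: "x \<in> X" and w: "w \<in> words X"
    by (auto simp: words_def)
  have "([(x, \<not> e)] @ (inv_word w @ w) @ [(x, e)], [(x, \<not> e)] @ [] @ [(x, e)]) \<in> pres_eq X R"
    using pres_eq_context[OF snoc.IH[OF w], of "[(x, \<not> e)]" "[(x, e)]"] x by simp
  moreover have "([(x, \<not> e), (x, e)], []) \<in> pres_eq X R"
    using pres_eq_cancel_pair[OF x, of "\<not> e"] by simp
  ultimately show ?case
    using a by (auto simp: inv_word_def intro: pres_eq_trans)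
qed (simp add: pres_eq_refl)

definition pres_class :: "'a set \<Rightarrow> 'a word set \<Rightarrow> 'a word \<Rightarrow> 'a word set" where
  "pres_class X R w = pres_eq X R `` {w}"

definition pres_gen :: "'a set \<Rightarrow> 'a word set \<Rightarrow> 'a \<Rightarrow> 'a word set" where
  "pres_gen X R x = pres_class X R [(x, True)]"

lemma pres_class_eqI: "(u, v) \<in> pres_eq X R \<Longrightarrow> pres_class X R u = pres_class X R v"
  unfolding pres_class_def using equiv_class_eq[OF pres_eq_equiv] by blast

lemma pres_carrier: "carrier (pres_group X R) = pres_class X R ` words X"
  by (auto simp: pres_group_def quotient_def pres_class_def)

lemma pres_carrierE:
  assumes "A \<in> carrier (pres_group X R)"
  obtains w where "w \<in> words X" "A = pres_class X R w"
  using assms pres_carrier by blast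

lemma pres_class_closed [simp]: "w \<in> words X \<Longrightarrow> pres_class X R w \<in> carrier (pres_group X R)"
  using pres_carrier by blast

lemma pres_one: "\<one>\<^bsub>pres_group X R\<^esub> = pres_class X R []"
  by (simp add: pres_group_def pres_class_def)

lemma pres_mult:
  assumes "u \<in> words X" "v \<in> words X"
  shows "pres_class X R u \<otimes>\<^bsub>pres_group X R\<^esub> pres_class X R v = pres_class X R (u @ v)"
proof -
  have "(\<Union>a\<in>pres_eq X R `` {u}. \<Union>b\<in>pres_eq X R `` {v}. pres_eq X R `` {a @ b})
      = pres_eq X R `` {u @ v}" (is "?lhs = ?rhs")
  proof
    show "?lhs \<subseteq> ?rhs"
      using pres_eq_append pres_eq_trans by blast
    have "u \<in> pres_eq X R `` {u}" "v \<in> pres_eq X R `` {v}"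
      using assms pres_eq_refl by auto
    then show "?rhs \<subseteq> ?lhs"
      by blast
  qed
  then show ?thesis
    by (simp add: pres_group_def pres_class_def)
qed

lemma group_pres_group: "group (pres_group X R)"
proof (rule groupI)
  fix x
  assume "x \<in> carrier (pres_group X R)"
  then obtain w where w: "w \<in> words X" "x = pres_class X R w"
    by (rule pres_carrierE)
  then have "pres_class X R (inv_word w) \<otimes>\<^bsub>pres_group X R\<^esub> x = \<one>\<^bsub>pres_group X R\<^esub>"
    by (simp add: pres_mult pres_one pres_class_eqI pres_eq_inv_word)
  with w show "\<exists>y\<in>carrier (pres_group X R). y \<otimes>\<^bsub>pres_group X R\<^esub> x = \<one>\<^bsub>pres_group X R\<^esub>"
    by (intro bexI[of _ "pres_class X R (inv_word w)"]) auto
qed (auto elim!: pres_carrierE simp: pres_mult pres_one)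

fun word_eval :: "('g, 'm) monoid_scheme \<Rightarrow> ('a \<Rightarrow> 'g) \<Rightarrow> 'a word \<Rightarrow> 'g" where
  "word_eval G f [] = \<one>\<^bsub>G\<^esub>"
| "word_eval G f ((x, e) # w) = (if e then f x else inv\<^bsub>G\<^esub> (f x)) \<otimes>\<^bsub>G\<^esub> word_eval G f w"

lemma word_eval_cong: "(\<And>x. x \<in> X \<Longrightarrow> f x = g x) \<Longrightarrow> w \<in> words X \<Longrightarrow> word_eval G f w = word_eval G g w"
  by (induction w) auto

context group
begin

lemma word_eval_closed: "f ` X \<subseteq> carrier G \<Longrightarrow> w \<in> words X \<Longrightarrow> word_eval G f w \<in> carrier G"
  by (induction w) auto

lemma word_eval_append:
  "f ` X \<subseteq> carrier G \<Longrightarrow> u \<in> words X \<Longrightarrow> v \<in> words X \<Longrightarrow>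
    word_eval G f (u @ v) = word_eval G f u \<otimes> word_eval G f v"
  by (induction u) (auto simp: m_assoc word_eval_closed image_subset_iff)

lemma word_eval_inv_word:
  assumes f: "f ` X \<subseteq> carrier G"
  shows "w \<in> words X \<Longrightarrow> word_eval G f (inv_word w) = inv (word_eval G f w)"
proof (induction w)
  case (Cons a w)
  obtain x e where a: "a = (x, e)"
    by (cases a)
  with Cons.prems have x: "x \<in> X" and w: "w \<in> words X"
    by auto
  have "word_eval G f (inv_word (a # w)) = inv (word_eval G f w) \<otimes> (if e then inv (f x) else f x)"
    using a x w Cons.IH f by (auto simp: word_eval_append[OF f] image_subset_iff)
  also have "\<dots> = inv (word_eval G f (a # w))"
    using a x f word_eval_closed[OF f w] by (auto simp: inv_mult_group image_subset_iff)
  finally show ?case .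
qed simp

lemma word_eval_respects_pres_eq:
  assumes f: "f ` X \<subseteq> carrier G"
    and rel: "\<And>r. r \<in> R \<Longrightarrow> r \<in> words X \<Longrightarrow> word_eval G f r = \<one>"
    and uv: "(u, v) \<in> pres_eq X R"
  shows "word_eval G f u = word_eval G f v"
proof -
  have step: "word_eval G f u = word_eval G f v" if "(u, v) \<in> pres_step X R" for u v
  proof -
    from that obtain a b s where uv: "u = a @ b" "v = a @ s @ b" and ws: "a @ b \<in> words X" "s \<in> words X"
      and s: "s \<in> R \<or> (\<exists>x\<in>X. \<exists>e. s = [(x, e), (x, \<not> e)])"
      by (auto simp: pres_step_def)
    from s have "word_eval G f s = \<one>"
      using rel ws(2) f by (auto simp: image_subset_iff)
    with uv ws show ?thesis
      by (simp add: word_eval_append[OF f] word_eval_closed[OF f])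
  qed
  have "(u, v) \<in> (pres_move X R)\<^sup>*"
    using uv by (simp add: pres_eq_def)
  then show ?thesis
    by (induction rule: rtrancl_induct) (auto dest: step)
qed

end

lemma hom_word_eval:
  assumes G: "group G" and H: "group H" and h: "h \<in> hom G H" and f: "f ` X \<subseteq> carrier G"
  shows "w \<in> words X \<Longrightarrow> h (word_eval G f w) = word_eval H (\<lambda>x. h (f x)) w"
proof (induction w)
  case Nil
  from G H h show ?case
    by (simp add: group_hom.hom_one group_hom_axioms_def group_hom_def)
next
  case (Cons a w)
  interpret group_hom G H h
    using G H h by (simp add: group_hom_def group_hom_axioms_def)
  show ?case
    using Cons f group.word_eval_closed[OF G f] by (cases a) auto
qed

lemma pres_gen_closed [simp]: "x \<in> X \<Longrightarrow> pres_gen X R x \<in> carrier (pres_group X R)"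
  by (simp add: pres_gen_def)

lemma pres_class_word_eval: "w \<in> words X \<Longrightarrow> pres_class X R w = word_eval (pres_group X R) (pres_gen X R) w"
proof (induction w)
  case (Cons a w)
  interpret P: group "pres_group X R"
    by (rule group_pres_group)
  obtain x e where a: "a = (x, e)"
    by (cases a)
  with Cons.prems have x: "x \<in> X" and w: "w \<in> words X"
    by auto
  have inv_gen: "inv\<^bsub>pres_group X R\<^esub> pres_gen X R x = pres_class X R [(x, False)]"
    using x pres_eq_cancel_pair[OF x, of False R]
    by (intro P.inv_equality) (auto simp: pres_gen_def pres_mult pres_one pres_class_eqI)
  have "pres_class X R (a # w) = pres_class X R [(x, e)] \<otimes>\<^bsub>pres_group X R\<^esub> pres_class X R w"
    using a x w by (simp add: pres_mult)
  with Cons.IH[OF w] inv_gen show ?case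
    using a by (cases e) (simp_all add: pres_gen_def)
qed (simp add: pres_one)

lemma word_eval_relator:
  "r \<in> R \<Longrightarrow> r \<in> words X \<Longrightarrow> word_eval (pres_group X R) (pres_gen X R) r = \<one>\<^bsub>pres_group X R\<^esub>"
  using pres_class_word_eval[of r X R] pres_class_eqI[OF pres_eq_relator[of r R X]] by (simp add: pres_one)

definition pres_lift :: "('g, 'm) monoid_scheme \<Rightarrow> ('a \<Rightarrow> 'g) \<Rightarrow> 'a word set \<Rightarrow> 'g" where
  "pres_lift G f A = word_eval G f (SOME w. w \<in> A)"

lemma pres_lift_class:
  assumes G: "group G" and f: "f ` X \<subseteq> carrier G"
    and rel: "\<And>r. r \<in> R \<Longrightarrow> r \<in> words X \<Longrightarrow> word_eval G f r = \<one>\<^bsub>G\<^esub>"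
    and w: "w \<in> words X"
  shows "pres_lift G f (pres_class X R w) = word_eval G f w"
proof -
  have "w \<in> pres_class X R w"
    using w by (simp add: pres_class_def pres_eq_refl)
  then have "(w, SOME w'. w' \<in> pres_class X R w) \<in> pres_eq X R"
    by (metis Image_singleton_iff pres_class_def someI)
  then show ?thesis
    unfolding pres_lift_def using group.word_eval_respects_pres_eq[OF G f rel] by metis
qed

lemma pres_lift_hom:
  assumes G: "group G" and f: "f ` X \<subseteq> carrier G"
    and rel: "\<And>r. r \<in> R \<Longrightarrow> r \<in> words X \<Longrightarrow> word_eval G f r = \<one>\<^bsub>G\<^esub>"
  shows "pres_lift G f \<in> hom (pres_group X R) G"
  by (rule homI) (auto elim!: pres_carrierE simp: pres_mult pres_lift_class[OF G f rel]
      group.word_eval_closed[OF G f] group.word_eval_append[OF G f])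

lemma pres_lift_gen:
  assumes G: "group G" and f: "f ` X \<subseteq> carrier G"
    and rel: "\<And>r. r \<in> R \<Longrightarrow> r \<in> words X \<Longrightarrow> word_eval G f r = \<one>\<^bsub>G\<^esub>"
    and x: "x \<in> X"
  shows "pres_lift G f (pres_gen X R x) = f x"
  using pres_lift_class[OF G f rel, where w = "[(x, True)]"] x f G
  by (auto simp: pres_gen_def words_def group.is_monoid monoid.r_one)

lemma pres_hom_eqI:
  assumes G: "group G" and h1: "h1 \<in> hom (pres_group X R) G" and h2: "h2 \<in> hom (pres_group X R) G"
    and gens: "\<And>x. x \<in> X \<Longrightarrow> h1 (pres_gen X R x) = h2 (pres_gen X R x)"
    and A: "A \<in> carrier (pres_group X R)"
  shows "h1 A = h2 A"
proof -
  obtain w where w: "w \<in> words X" "A = pres_class X R w"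
    using A by (rule pres_carrierE)
  have "pres_gen X R ` X \<subseteq> carrier (pres_group X R)"
    by (auto simp: pres_gen_def)
  then have "h (pres_class X R w) = word_eval G (\<lambda>x. h (pres_gen X R x)) w"
    if "h \<in> hom (pres_group X R) G" for h
    using pres_class_word_eval[OF w(1)] hom_word_eval[OF group_pres_group G that _ w(1)] by simp
  with w h1 h2 show ?thesis
    using word_eval_cong[of X "\<lambda>x. h1 (pres_gen X R x)" "\<lambda>x. h2 (pres_gen X R x)", OF gens] by metis
qed

lemma hom_id: "(\<lambda>x. x) \<in> hom G G"
  by (simp add: hom_def)

lemma iso_by_inverse_homs:
  assumes "f \<in> hom G H" "g \<in> hom H G"
    and "\<And>x. x \<in> carrier G \<Longrightarrow> g (f x) = x" "\<And>y. y \<in> carrier H \<Longrightarrow> f (g y) = y"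
  shows "G \<cong> H"
  using assms group_isomorphisms_imp_iso[of G H f g] is_isoI unfolding group_isomorphisms_def by blast

section \<open>Products and conjugation in a group\<close>

fun seq_prod :: "('g, 'm) monoid_scheme \<Rightarrow> (nat \<Rightarrow> 'g) \<Rightarrow> nat \<Rightarrow> 'g" where
  "seq_prod G g 0 = \<one>\<^bsub>G\<^esub>"
| "seq_prod G g (Suc k) = seq_prod G g k \<otimes>\<^bsub>G\<^esub> g k"

definition conjug :: "('g, 'm) monoid_scheme \<Rightarrow> 'g \<Rightarrow> 'g \<Rightarrow> 'g" where
  "conjug G c x = inv\<^bsub>G\<^esub> c \<otimes>\<^bsub>G\<^esub> x \<otimes>\<^bsub>G\<^esub> c"

context group
begin

lemma mult_inv_cancel_left [simp]: "c \<in> carrier G \<Longrightarrow> z \<in> carrier G \<Longrightarrow> c \<otimes> (inv c \<otimes> z) = z"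
  by (simp add: m_assoc[symmetric])

lemma inv_mult_cancel_left [simp]: "c \<in> carrier G \<Longrightarrow> z \<in> carrier G \<Longrightarrow> inv c \<otimes> (c \<otimes> z) = z"
  by (simp add: m_assoc[symmetric])

lemma seq_prod_closed [simp]: "(\<And>r. g r \<in> carrier G) \<Longrightarrow> seq_prod G g k \<in> carrier G"
  by (induction k) auto

lemma seq_prod_cong: "(\<And>r. r < k \<Longrightarrow> f r = g r) \<Longrightarrow> seq_prod G f k = seq_prod G g k"
  by (induction k) auto

lemma seq_prod_telescope:
  assumes g: "\<And>z. g z \<in> carrier G"
  shows "seq_prod G (\<lambda>r. inv (g (c + int r)) \<otimes> g (c + int r + 1)) k = inv (g c) \<otimes> g (c + int k)"
proof (induction k)
  case (Suc k)
  then show ?case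
    using g by (simp add: m_assoc add.assoc add.commute[of 1])
qed (use g in simp)

lemma word_eval_positive_word:
  "(\<And>z. f z \<in> carrier G) \<Longrightarrow> word_eval G f (map (\<lambda>j. (h j, True)) [0..<k]) = seq_prod G (\<lambda>j. f (h j)) k"
  by (induction k) (auto simp: word_eval_append[of f UNIV] image_subset_iff words_def)

lemma conjug_closed [simp]: "c \<in> carrier G \<Longrightarrow> x \<in> carrier G \<Longrightarrow> conjug G c x \<in> carrier G"
  by (simp add: conjug_def)

lemma conjug_one [simp]: "x \<in> carrier G \<Longrightarrow> conjug G \<one> x = x"
  by (simp add: conjug_def)

lemma conjug_self [simp]: "c \<in> carrier G \<Longrightarrow> conjug G c c = c"
  by (simp add: conjug_def)

lemma conjug_mult:
  "c \<in> carrier G \<Longrightarrow> x \<in> carrier G \<Longrightarrow> y \<in> carrier G \<Longrightarrow> conjug G c (x \<otimes> y) = conjug G c x \<otimes> conjug G c y"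
  by (simp add: conjug_def m_assoc)

lemma conjug_hom: "c \<in> carrier G \<Longrightarrow> conjug G c \<in> hom G G"
  by (rule homI) (simp_all add: conjug_mult)

lemma conjug_inv: "c \<in> carrier G \<Longrightarrow> x \<in> carrier G \<Longrightarrow> conjug G c (inv x) = inv (conjug G c x)"
  by (simp add: conjug_def m_assoc inv_mult_group)

lemma conjug_nat_pow: "c \<in> carrier G \<Longrightarrow> x \<in> carrier G \<Longrightarrow> conjug G c (x [^] (r::nat)) = conjug G c x [^] r"
  by (induction r) (simp_all add: conjug_mult, simp add: conjug_def)

lemma conjug_conjug:
  "c \<in> carrier G \<Longrightarrow> d \<in> carrier G \<Longrightarrow> x \<in> carrier G \<Longrightarrow> conjug G c (conjug G d x) = conjug G (d \<otimes> c) x"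
  by (simp add: conjug_def m_assoc inv_mult_group)

lemma conjug_eq_iff:
  assumes "c \<in> carrier G" "x \<in> carrier G" "y \<in> carrier G"
  shows "conjug G c x = y \<longleftrightarrow> x \<otimes> c = c \<otimes> y"
  using assms inv_solve_left'[of y c "x \<otimes> c"] by (auto simp: conjug_def m_assoc)

lemma conjug_by_conjug:
  "d \<in> carrier G \<Longrightarrow> y \<in> carrier G \<Longrightarrow> x \<in> carrier G \<Longrightarrow>
    conjug G (conjug G d y) x = conjug G d (conjug G y (conjug G (inv d) x))"
  by (simp add: conjug_conjug) (simp add: conjug_def m_assoc)

lemma conjug_conjug_distrib:
  "e \<in> carrier G \<Longrightarrow> d \<in> carrier G \<Longrightarrow> x \<in> carrier G \<Longrightarrow>
    conjug G e (conjug G d x) = conjug G (conjug G e d) (conjug G e x)"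
  by (simp add: conjug_def m_assoc inv_mult_group)

lemma conjug_nat_pow_shift:
  assumes T: "T \<in> carrier G" and f: "\<And>j. f j \<in> carrier G" and shift: "\<And>j. conjug G T (f j) = f (j + 1)"
  shows "conjug G (T [^] (r::nat)) (f j) = f (j + int r)"
proof (induction r)
  case (Suc r)
  have "conjug G (T [^] Suc r) (f j) = conjug G T (conjug G (T [^] r) (f j))"
    using T f by (simp add: conjug_conjug)
  with Suc shift show ?case
    by (simp add: ac_simps)
qed (use f in simp)

lemma conjug_int_pow_shift:
  assumes T: "T \<in> carrier G" and f: "\<And>j. f j \<in> carrier G" and shift: "\<And>j. conjug G T (f j) = f (j + 1)"
  shows "conjug G (T [^] (z::int)) (f j) = f (j + z)"
proof (cases "z \<ge> 0")
  case True
  then obtain r where "z = int r"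
    by (metis nonneg_eq_int)
  then show ?thesis
    using conjug_nat_pow_shift[where f = f, OF T f shift] by (simp add: int_pow_int)
next
  case False
  then obtain r where z: "z = - int r"
    by (metis nonpos_int_cases linorder_linear)
  have "f j = conjug G (T [^] r) (f (j - int r))"
    using conjug_nat_pow_shift[where f = f and r = r and j = "j - int r", OF T f shift] by simp
  then have "conjug G (inv (T [^] r)) (f j) = f (j - int r)"
    using T f by (simp add: conjug_conjug)
  with z T show ?thesis
    by (simp add: int_pow_neg int_pow_int)
qed

end

lemma hom_seq_prod:
  assumes G: "group G" and H: "group H" and h: "h \<in> hom G H" and f: "\<And>r. f r \<in> carrier G"
  shows "h (seq_prod G f k) = seq_prod H (\<lambda>r. h (f r)) k"
proof -
  interpret group_hom G H h
    using G H h by (simp add: group_hom_def group_hom_axioms_def)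
  show ?thesis
    by (induction k) (auto simp: f group.seq_prod_closed[OF G])
qed

section \<open>Cyclically presented groups\<close>

lemma idx_lt: "0 < n \<Longrightarrow> idx n z < n"
  by (simp add: idx_def nat_less_iff)

lemma int_idx: "0 < n \<Longrightarrow> int (idx n z) = z mod int n"
  by (simp add: idx_def)

lemma idx_int: "i < n \<Longrightarrow> idx n (int i) = i"
  by (simp add: idx_def nat_mod_as_int[symmetric])

lemma idx_mod [simp]: "idx n (z mod int n) = idx n z"
  by (simp add: idx_def)

lemma idx_idx_add: "0 < n \<Longrightarrow> idx n (int (idx n z) + a) = idx n (z + a)"
  by (simp add: int_idx idx_def mod_simps)

definition periodic :: "nat \<Rightarrow> (int \<Rightarrow> 'g) \<Rightarrow> bool" where
  "periodic n g \<longleftrightarrow> (\<forall>z. g (z mod int n) = g z)"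

lemma periodic_eq: "periodic n g \<Longrightarrow> z mod int n = z' mod int n \<Longrightarrow> g z = g z'"
  unfolding periodic_def by metis

lemma periodic_idx: "0 < n \<Longrightarrow> periodic n g \<Longrightarrow> g (int (idx n z)) = g z"
  by (simp add: int_idx periodic_def)

lemma periodic_shift: "periodic n g \<Longrightarrow> periodic n (\<lambda>z. g (z + j))"
  unfolding periodic_def by (metis mod_add_left_eq)

lemma periodic_mod_add: "periodic n g \<Longrightarrow> g (z mod int n + c) = g (z + c)"
  using periodic_shift[of n g c] by (simp add: periodic_def)

lemma shift_word_Nil [simp]: "shift_word n a [] = []"
  by (simp add: shift_word_def)

lemma shift_word_Cons [simp]: "shift_word n a ((x, e) # v) = (idx n (int x + a), e) # shift_word n a v"
  by (simp add: shift_word_def)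

lemma shift_word_append [simp]: "shift_word n a (u @ v) = shift_word n a u @ shift_word n a v"
  by (simp add: shift_word_def)

lemma shift_word_words: "0 < n \<Longrightarrow> shift_word n j w \<in> words {..<n}"
  by (induction w) (auto simp: shift_word_def idx_lt)

lemma shift_word_shift_word: "0 < n \<Longrightarrow> shift_word n a (shift_word n b w) = shift_word n (b + a) w"
  by (induction w) (auto simp: idx_idx_add add.assoc)

lemma shift_word_mod: "z mod int n = z' mod int n \<Longrightarrow> shift_word n z w = shift_word n z' w"
  unfolding shift_word_def idx_def by (metis mod_add_right_eq)

lemma shift_word_zero: "w \<in> words {..<n} \<Longrightarrow> shift_word n 0 w = w"
  by (induction w) (auto simp: idx_int)

lemma word_eval_shift_word:
  "0 < n \<Longrightarrow> periodic n g \<Longrightarrow>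
    word_eval G (\<lambda>i. g (int i)) (shift_word n j w) = word_eval G (\<lambda>i. g (int i + j)) w"
  by (induction w) (auto simp: periodic_idx)

abbreviation cyc_rels :: "nat \<Rightarrow> nat word \<Rightarrow> nat word set" where
  "cyc_rels n w \<equiv> {shift_word n (int j) w | j. j < n}"

definition cyc_gen :: "nat \<Rightarrow> nat word \<Rightarrow> int \<Rightarrow> nat word set" where
  "cyc_gen n w z = pres_gen {..<n} (cyc_rels n w) (idx n z)"

lemma group_cyc_group: "group (cyc_group n w)"
  by (simp add: cyc_group_def group_pres_group)

lemma periodic_cyc_gen: "periodic n (cyc_gen n w)"
  by (simp add: periodic_def cyc_gen_def)

lemma cyc_gen_closed [simp]: "0 < n \<Longrightarrow> cyc_gen n w z \<in> carrier (cyc_group n w)"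
  by (simp add: cyc_gen_def cyc_group_def pres_gen_def idx_lt)

lemma cyc_gen_int: "i < n \<Longrightarrow> cyc_gen n w (int i) = pres_gen {..<n} (cyc_rels n w) i"
  by (simp add: cyc_gen_def idx_int)

lemma word_eval_cyc_relator:
  assumes n: "0 < n"
  shows "word_eval (cyc_group n w) (\<lambda>i. cyc_gen n w (int i)) (shift_word n j w) = \<one>\<^bsub>cyc_group n w\<^esub>"
proof -
  have rel: "shift_word n (int (idx n j)) w \<in> cyc_rels n w"
    using idx_lt[OF n] by blast
  have "word_eval (cyc_group n w) (\<lambda>i. cyc_gen n w (int i)) (shift_word n j w)
      = word_eval (cyc_group n w) (\<lambda>i. cyc_gen n w (int i)) (shift_word n (int (idx n j)) w)"
    using shift_word_mod[of j n "int (idx n j)" w] int_idx[OF n] by simp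
  also have "\<dots> = word_eval (cyc_group n w) (pres_gen {..<n} (cyc_rels n w)) (shift_word n (int (idx n j)) w)"
    by (rule word_eval_cong[OF _ shift_word_words[OF n]]) (simp add: cyc_gen_int)
  also have "\<dots> = \<one>\<^bsub>cyc_group n w\<^esub>"
    using word_eval_relator[OF rel shift_word_words[OF n]] by (simp add: cyc_group_def)
  finally show ?thesis .
qed

definition cyc_lift :: "('g, 'm) monoid_scheme \<Rightarrow> (int \<Rightarrow> 'g) \<Rightarrow> nat word set \<Rightarrow> 'g" where
  "cyc_lift G g = pres_lift G (\<lambda>i. g (int i))"

lemma cyc_lift:
  assumes n: "0 < n" and G: "group G" and g: "periodic n g" "\<And>z. g z \<in> carrier G"
    and rel: "\<And>j. word_eval G (\<lambda>i. g (int i)) (shift_word n j w) = \<one>\<^bsub>G\<^esub>"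
  shows "cyc_lift G g \<in> hom (cyc_group n w) G" and "\<And>z. cyc_lift G g (cyc_gen n w z) = g z"
proof -
  have f: "(\<lambda>i. g (int i)) ` {..<n} \<subseteq> carrier G"
    using g by auto
  have rels: "\<And>r. r \<in> cyc_rels n w \<Longrightarrow> r \<in> words {..<n} \<Longrightarrow> word_eval G (\<lambda>i. g (int i)) r = \<one>\<^bsub>G\<^esub>"
    using rel by blast
  show "cyc_lift G g \<in> hom (cyc_group n w) G"
    unfolding cyc_group_def cyc_lift_def by (rule pres_lift_hom[OF G f rels])
  show "cyc_lift G g (cyc_gen n w z) = g z" for z
    using pres_lift_gen[where R = "cyc_rels n w", OF G f rels, where x = "idx n z"] idx_lt[OF n] periodic_idx[OF n g(1)]
    by (simp add: cyc_gen_def cyc_lift_def)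
qed

lemma cyc_hom_eqI:
  assumes n: "0 < n" and G: "group G"
    and h1: "h1 \<in> hom (cyc_group n w) G" and h2: "h2 \<in> hom (cyc_group n w) G"
    and gens: "\<And>z. h1 (cyc_gen n w z) = h2 (cyc_gen n w z)"
    and A: "A \<in> carrier (cyc_group n w)"
  shows "h1 A = h2 A"
proof (rule pres_hom_eqI[OF G h1[unfolded cyc_group_def] h2[unfolded cyc_group_def] _ A[unfolded cyc_group_def]])
  show "h1 (pres_gen {..<n} (cyc_rels n w) x) = h2 (pres_gen {..<n} (cyc_rels n w) x)" if "x \<in> {..<n}" for x
    using gens[of "int x"] that by (simp add: cyc_gen_int)
qed

lemma cyc_group_isoI:
  assumes n: "0 < n"
    and h: "h \<in> hom (cyc_group n w1) (cyc_group n w2)" and h': "h' \<in> hom (cyc_group n w2) (cyc_group n w1)"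
    and inv1: "\<And>z. h' (h (cyc_gen n w1 z)) = cyc_gen n w1 z"
    and inv2: "\<And>z. h (h' (cyc_gen n w2 z)) = cyc_gen n w2 z"
  shows "cyc_group n w1 \<cong> cyc_group n w2"
proof (rule iso_by_inverse_homs[OF h h'])
  show "h' (h x) = x" if "x \<in> carrier (cyc_group n w1)" for x
    using cyc_hom_eqI[OF n group_cyc_group hom_compose[OF h h'] hom_id _ that] inv1 by simp
  show "h (h' y) = y" if "y \<in> carrier (cyc_group n w2)" for y
    using cyc_hom_eqI[OF n group_cyc_group hom_compose[OF h' h] hom_id _ that] inv2 by simp
qed

section \<open>\<open>H\<^sub>n(m,k)\<close> is the cyclically presented group \<open>L\<^sub>n(p,\<dots>,p)\<close>\<close>

definition window_prod :: "('g, 'm) monoid_scheme \<Rightarrow> (int \<Rightarrow> 'g) \<Rightarrow> int \<Rightarrow> nat \<Rightarrow> int \<Rightarrow> 'g" where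
  "window_prod G y p k z = seq_prod G (\<lambda>r. y (p + z + int r)) k"

context group
begin

lemma mult_inv_eq_one_iff: "a \<in> carrier G \<Longrightarrow> b \<in> carrier G \<Longrightarrow> a \<otimes> inv b = \<one> \<longleftrightarrow> a = b"
  by (simp add: inv_solve_right')

lemma window_prod_closed [simp]: "(\<And>z. y z \<in> carrier G) \<Longrightarrow> window_prod G y p k z \<in> carrier G"
  by (simp add: window_prod_def)

lemma word_eval_H_relator:
  assumes n: "0 < n" and g: "periodic n g" "\<And>z. g z \<in> carrier G"
  shows "word_eval G (\<lambda>i. g (int i)) (shift_word n j (H_word n m k)) =
    g (1 + j) \<otimes> g (1 + m + j) \<otimes> inv (g (1 + k + j))"
proof -
  have "word_eval G (\<lambda>i. g (int i)) (shift_word n j (H_word n m k)) = word_eval G (\<lambda>i. g (int i + j)) (H_word n m k)"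
    by (rule word_eval_shift_word[OF n g(1)])
  also have "\<dots> = g (1 + j) \<otimes> (g (1 + m + j) \<otimes> inv (g (1 + k + j)))"
    using periodic_idx[OF n periodic_shift[OF g(1)], of _ j] g(2) by (simp add: H_word_def)
  finally show ?thesis
    using g(2) by (simp add: m_assoc)
qed

lemma word_eval_L_relator:
  assumes n: "0 < n" and g: "periodic n g" "\<And>z. g z \<in> carrier G"
  shows "word_eval G (\<lambda>i. g (int i)) (shift_word n j (L_word n (replicate k p))) =
    window_prod G g p k j \<otimes> g (int k - 1 + j) \<otimes> inv (window_prod G g p k (j + 1))"
proof -
  define g' where "g' = (\<lambda>z. g (z + j))"
  have g': "periodic n g'" "\<And>z. g' z \<in> carrier G"
    using periodic_shift[OF g(1)] g(2) by (auto simp: g'_def)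
  have f: "(\<lambda>i. g' (int i)) ` UNIV \<subseteq> carrier G"
    using g' by auto
  have prefix: "map (\<lambda>j. (idx n ((replicate k p @ [-1]) ! j + int j), True)) [0..<k+1] =
      map (\<lambda>j. (idx n (p + int j), True)) [0..<k] @ [(idx n (int k - 1), True)]"
    by (auto simp: nth_append)
  have suffix: "map (\<lambda>j. (idx n (replicate k p ! j + int j + 1), True)) [0..<k] =
      map (\<lambda>j. (idx n (p + int j + 1), True)) [0..<k]"
    by auto
  have "word_eval G (\<lambda>i. g' (int i)) (L_word n (replicate k p)) =
      seq_prod G (\<lambda>r. g' (p + int r)) k \<otimes> g' (int k - 1) \<otimes> inv (seq_prod G (\<lambda>r. g' (p + int r + 1)) k)"
    unfolding L_word_def Let_def length_replicate prefix suffix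
    using g' word_eval_append[OF f] word_eval_inv_word[OF f] word_eval_positive_word[of "\<lambda>i. g' (int i)"]
      periodic_idx[OF n g'(1)]
    by (simp add: m_assoc words_def)
  moreover have "word_eval G (\<lambda>i. g (int i)) (shift_word n j (L_word n (replicate k p))) =
      word_eval G (\<lambda>i. g' (int i)) (L_word n (replicate k p))"
    unfolding g'_def by (rule word_eval_shift_word[OF n g(1)])
  ultimately show ?thesis
    unfolding g'_def window_prod_def by (simp add: ac_simps)
qed

lemma window_prod_telescope:
  assumes p: "p mod int n = (int k - m - 1) mod int n"
    and x: "periodic n x" "\<And>z. x z \<in> carrier G"
    and y: "\<And>z. y z = inv (x (z - int k + 1)) \<otimes> x (z - int k + 2)"
  shows "window_prod G y p k a = inv (x (a - m)) \<otimes> x (a - m + int k)"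
proof -
  define c where "c = p + a - int k + 1"
  have shift: "(p + t) mod int n = (int k - m - 1 + t) mod int n" for t
    by (metis p mod_add_left_eq)
  have "window_prod G y p k a = seq_prod G (\<lambda>r. inv (x (c + int r)) \<otimes> x (c + int r + 1)) k"
    unfolding window_prod_def y by (rule seq_prod_cong) (simp add: c_def algebra_simps)
  also have "\<dots> = inv (x c) \<otimes> x (c + int k)"
    by (rule seq_prod_telescope[OF x(2)])
  also have "x c = x (a - m)"
    using shift[of "a - int k + 1"] by (intro periodic_eq[OF x(1)]) (simp add: c_def algebra_simps)
  also have "x (c + int k) = x (a - m + int k)"
    using shift[of "a + 1"] by (intro periodic_eq[OF x(1)]) (simp add: c_def algebra_simps)
  finally show ?thesis .
qed

end

context group
begin

lemma H_relations_imp_L_relations: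
  assumes p: "p mod int n = (int k - m - 1) mod int n"
    and x: "periodic n x" "\<And>z. x z \<in> carrier G"
    and rel: "\<And>a. x a \<otimes> x (a + m) = x (a + int k)"
    and y_def: "\<And>z. y z = inv (x (z - int k + 1)) \<otimes> x (z - int k + 2)"
  shows "periodic n y" and "\<And>z. window_prod G y p k z = x z"
    and "\<And>j. window_prod G y p k j \<otimes> y (int k - 1 + j) = window_prod G y p k (j + 1)"
proof -
  show "periodic n y"
    using periodic_mod_add[OF x(1), of _ "1 - int k"] periodic_mod_add[OF x(1), of _ "2 - int k"]
    by (simp add: periodic_def y_def algebra_simps)
  show window: "window_prod G y p k z = x z" for z
  proof -
    have "x (z - m) \<otimes> x z = x (z - m + int k)"
      using rel[of "z - m"] by simp
    then show ?thesis
      using window_prod_telescope[OF p x y_def] x(2) by (simp add: inv_solve_left')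
  qed
  show "window_prod G y p k j \<otimes> y (int k - 1 + j) = window_prod G y p k (j + 1)" for j
  proof -
    have "y (int k - 1 + j) = inv (x j) \<otimes> x (j + 1)"
      by (simp add: y_def algebra_simps)
    then show ?thesis
      using x(2) by (simp add: window)
  qed
qed

lemma L_relations_imp_H_relations:
  assumes p: "p mod int n = (int k - m - 1) mod int n"
    and y: "periodic n y" "\<And>z. y z \<in> carrier G"
    and rel: "\<And>j. window_prod G y p k j \<otimes> y (int k - 1 + j) = window_prod G y p k (j + 1)"
  defines "x \<equiv> window_prod G y p k"
  shows "periodic n x" and "\<And>z. inv (x (z - int k + 1)) \<otimes> x (z - int k + 2) = y z"
    and "\<And>a. x a \<otimes> x (a + m) = x (a + int k)"
proof -
  show per: "periodic n x"
  proof -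
    have "y (p + z mod int n + int r) = y (p + z + int r)" for z r
      using periodic_mod_add[OF y(1), of z "p + int r"] by (simp add: ac_simps)
    then show ?thesis
      unfolding periodic_def x_def window_prod_def by simp
  qed
  have closed: "x z \<in> carrier G" for z
    using y(2) by (simp add: x_def)
  show quot: "inv (x (z - int k + 1)) \<otimes> x (z - int k + 2) = y z" for z
    using rel[of "z - int k + 1"] closed y(2) by (simp add: x_def inv_solve_left' algebra_simps)
  show "x a \<otimes> x (a + m) = x (a + int k)" for a
    using window_prod_telescope[OF p per closed quot[symmetric], of "a + m"] closed
    by (simp add: x_def inv_solve_left')
qed

end

lemma cyc_gen_H_relation:
  assumes n: "0 < n"
  shows "cyc_gen n (H_word n m k) a \<otimes>\<^bsub>cyc_group n (H_word n m k)\<^esub> cyc_gen n (H_word n m k) (a + m)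
       = cyc_gen n (H_word n m k) (a + k)"
proof -
  let ?G = "cyc_group n (H_word n m k)"
  interpret group ?G
    by (rule group_cyc_group)
  have "cyc_gen n (H_word n m k) a \<otimes>\<^bsub>?G\<^esub> cyc_gen n (H_word n m k) (a + m)
      \<otimes>\<^bsub>?G\<^esub> inv\<^bsub>?G\<^esub> (cyc_gen n (H_word n m k) (a + k)) = \<one>\<^bsub>?G\<^esub>"
    using word_eval_cyc_relator[OF n, of "H_word n m k" "a - 1"]
      word_eval_H_relator[OF n periodic_cyc_gen cyc_gen_closed[OF n], of "a - 1" m k]
    by (simp add: algebra_simps)
  then show ?thesis
    using n by (simp add: mult_inv_eq_one_iff)
qed

lemma cyc_gen_L_relation:
  fixes k :: nat and p :: int
  assumes n: "0 < n"
  defines "w \<equiv> L_word n (replicate k p)"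
  shows "window_prod (cyc_group n w) (cyc_gen n w) p k j \<otimes>\<^bsub>cyc_group n w\<^esub> cyc_gen n w (int k - 1 + j)
       = window_prod (cyc_group n w) (cyc_gen n w) p k (j + 1)"
proof -
  let ?G = "cyc_group n w"
  interpret group ?G
    by (rule group_cyc_group)
  have "window_prod ?G (cyc_gen n w) p k j \<otimes>\<^bsub>?G\<^esub> cyc_gen n w (int k - 1 + j)
      \<otimes>\<^bsub>?G\<^esub> inv\<^bsub>?G\<^esub> (window_prod ?G (cyc_gen n w) p k (j + 1)) = \<one>\<^bsub>?G\<^esub>"
    using word_eval_cyc_relator[OF n, of w j] word_eval_L_relator[OF n periodic_cyc_gen cyc_gen_closed[OF n], of j k p]
    by (simp add: w_def)
  then show ?thesis
    using n by (simp add: mult_inv_eq_one_iff)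
qed

lemma (in group) H_relators_hold:
  assumes n: "0 < n" and g: "periodic n g" "\<And>z. g z \<in> carrier G"
    and rel: "\<And>a. g a \<otimes> g (a + m) = g (a + k)"
  shows "word_eval G (\<lambda>i. g (int i)) (shift_word n j (H_word n m k)) = \<one>"
  using word_eval_H_relator[OF n g, of j m k] rel[of "1 + j"] g(2) by (simp add: mult_inv_eq_one_iff algebra_simps)

lemma (in group) L_relators_hold:
  assumes n: "0 < n" and g: "periodic n g" "\<And>z. g z \<in> carrier G"
    and rel: "\<And>j. window_prod G g p k j \<otimes> g (int k - 1 + j) = window_prod G g p k (j + 1)"
  shows "word_eval G (\<lambda>i. g (int i)) (shift_word n j (L_word n (replicate k p))) = \<one>"
  using word_eval_L_relator[OF n g, of j k p] rel[of j] g(2) by (simp add: mult_inv_eq_one_iff)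

text \<open>The mutually inverse isomorphisms are \<open>x\<^sub>z \<mapsto> y\<^bsub>p+z\<^esub> \<cdots> y\<^bsub>p+z+k-1\<^esub>\<close> and
  \<open>y\<^sub>z \<mapsto> x\<^bsub>z-k+1\<^esub>\<inverse> x\<^bsub>z-k+2\<^esub>\<close>.\<close>

theorem H_group_iso_L_group:
  assumes n: "0 < n" and p: "p mod int n = (int k - m - 1) mod int n"
  shows "cyc_group n (H_word n m (int k)) \<cong> cyc_group n (L_word n (replicate k p))"
proof -
  define wH where "wH = H_word n m (int k)"
  define wL where "wL = L_word n (replicate k p)"
  let ?H = "cyc_group n wH" and ?L = "cyc_group n wL"
  interpret H: group ?H
    by (rule group_cyc_group)
  interpret L: group ?L
    by (rule group_cyc_group)
  define x where "x = cyc_gen n wH"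
  define y where "y = cyc_gen n wL"
  have x: "periodic n x" "\<And>z. x z \<in> carrier ?H"
    using n by (simp_all add: x_def periodic_cyc_gen)
  have y: "periodic n y" "\<And>z. y z \<in> carrier ?L"
    using n by (simp_all add: y_def periodic_cyc_gen)
  have relH: "x a \<otimes>\<^bsub>?H\<^esub> x (a + m) = x (a + int k)" for a
    using cyc_gen_H_relation[OF n] by (simp add: x_def wH_def)
  have relL: "window_prod ?L y p k j \<otimes>\<^bsub>?L\<^esub> y (int k - 1 + j) = window_prod ?L y p k (j + 1)" for j
    using cyc_gen_L_relation[OF n] by (simp add: y_def wL_def)
  define x' where "x' = window_prod ?L y p k"
  define y' where "y' = (\<lambda>z. inv\<^bsub>?H\<^esub> (x (z - int k + 1)) \<otimes>\<^bsub>?H\<^esub> x (z - int k + 2))"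
  note L_to_H = L.L_relations_imp_H_relations[OF p y relL, folded x'_def]
  have y': "y' z = inv\<^bsub>?H\<^esub> (x (z - int k + 1)) \<otimes>\<^bsub>?H\<^esub> x (z - int k + 2)" for z
    by (simp add: y'_def)
  note H_to_L = H.H_relations_imp_L_relations[OF p x relH y']
  have x': "\<And>z. x' z \<in> carrier ?L" and y': "\<And>z. y' z \<in> carrier ?H"
    using x(2) y(2) by (simp_all add: x'_def y'_def)
  define h where "h = cyc_lift ?L x'"
  define h' where "h' = cyc_lift ?H y'"
  have h: "h \<in> hom ?H ?L" "\<And>z. h (x z) = x' z"
    using cyc_lift[OF n L.is_group L_to_H(1) x' L.H_relators_hold[OF n L_to_H(1) x' L_to_H(3)]]
    unfolding h_def x_def wH_def by auto
  have h': "h' \<in> hom ?L ?H" "\<And>z. h' (y z) = y' z"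
    using cyc_lift[OF n H.is_group H_to_L(1) y' H.L_relators_hold[OF n H_to_L(1) y' H_to_L(3)]]
    unfolding h'_def y_def wL_def by auto
  interpret h: group_hom ?H ?L h
    using h(1) by (simp add: group_hom_def group_hom_axioms_def)
  show ?thesis
    unfolding wH_def[symmetric] wL_def[symmetric]
  proof (rule cyc_group_isoI[OF n h(1) h'(1)])
    show "h' (h (cyc_gen n wH z)) = cyc_gen n wH z" for z
      using hom_seq_prod[OF L.is_group H.is_group h'(1) y(2)] H_to_L(2)[of z]
      by (simp add: h h' x_def[symmetric] x'_def window_prod_def)
    show "h (h' (cyc_gen n wL z)) = cyc_gen n wL z" for z
      using L_to_H(2)[of z] x(2) by (simp add: h h' y_def[symmetric] y'_def x'_def[symmetric])
  qed
qed

section \<open>The shift automorphism and the natural HNN extension\<close>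

lemma group_semidirect_int:
  assumes G: "group G"
    and hom: "\<And>a. \<phi> a \<in> hom G G"
    and add: "\<And>a b x. x \<in> carrier G \<Longrightarrow> \<phi> a (\<phi> b x) = \<phi> (a + b) x"
    and zero: "\<And>x. x \<in> carrier G \<Longrightarrow> \<phi> 0 x = x"
  shows "group (semidirect_int G \<phi>)"
proof -
  interpret G: group G
    by (rule G)
  interpret \<phi>: group_hom G G "\<phi> a" for a
    using hom by (simp add: group_hom_def group_hom_axioms_def G)
  show ?thesis
  proof (rule groupI)
    fix x
    assume "x \<in> carrier (semidirect_int G \<phi>)"
    then obtain g a where x: "x = (g, a)" "g \<in> carrier G"
      by (auto simp: semidirect_int_def)
    then have "(\<phi> (-a) (inv\<^bsub>G\<^esub> g), -a) \<otimes>\<^bsub>semidirect_int G \<phi>\<^esub> x = \<one>\<^bsub>semidirect_int G \<phi>\<^esub>"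
      by (simp add: semidirect_int_def add \<phi>.hom_mult[symmetric])
    with x show "\<exists>y\<in>carrier (semidirect_int G \<phi>). y \<otimes>\<^bsub>semidirect_int G \<phi>\<^esub> x = \<one>\<^bsub>semidirect_int G \<phi>\<^esub>"
      by (intro bexI[where x = "(\<phi> (-a) (inv\<^bsub>G\<^esub> g), -a)"]) (auto simp: semidirect_int_def)
  qed (auto simp: semidirect_int_def add zero G.m_assoc add.assoc)
qed

lemma shift_word_pres_step:
  assumes n: "0 < n" and uv: "(u, v) \<in> pres_step {..<n} (cyc_rels n w)"
  shows "(shift_word n a u, shift_word n a v) \<in> pres_step {..<n} (cyc_rels n w)"
proof -
  from uv obtain u0 v0 s where uv: "u = u0 @ v0" "v = u0 @ s @ v0"
    and s: "s \<in> cyc_rels n w \<or> (\<exists>x\<in>{..<n}. \<exists>e. s = [(x, e), (x, \<not> e)])"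
    by (auto simp: pres_step_def)
  have "shift_word n a s \<in> cyc_rels n w \<or> (\<exists>x\<in>{..<n}. \<exists>e. shift_word n a s = [(x, e), (x, \<not> e)])"
    using s
  proof
    assume "s \<in> cyc_rels n w"
    then obtain j where "s = shift_word n (int j) w"
      by blast
    then have "shift_word n a s = shift_word n (int (idx n (int j + a))) w"
      using shift_word_shift_word[OF n] shift_word_mod[of "int j + a" n "int (idx n (int j + a))"] int_idx[OF n]
      by simp
    then show ?thesis
      using idx_lt[OF n] by blast
  qed (auto simp: idx_lt[OF n])
  with uv show ?thesis
    unfolding pres_step_def
    by (intro CollectI exI[of _ "shift_word n a u0"] exI[of _ "shift_word n a v0"] exI[of _ "shift_word n a s"])
      (auto simp: shift_word_words[OF n])
qed

lemma shift_word_pres_eq: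
  assumes n: "0 < n" and uv: "(u, v) \<in> pres_eq {..<n} (cyc_rels n w)"
  shows "(shift_word n a u, shift_word n a v) \<in> pres_eq {..<n} (cyc_rels n w)"
proof -
  have "(u, v) \<in> (pres_move {..<n} (cyc_rels n w))\<^sup>*"
    using uv by (simp add: pres_eq_def)
  then have "(shift_word n a u, shift_word n a v) \<in> (pres_move {..<n} (cyc_rels n w))\<^sup>*"
  proof (induction rule: rtrancl_induct)
    case (step y z)
    then have "(shift_word n a y, shift_word n a z) \<in> pres_move {..<n} (cyc_rels n w)"
      using shift_word_pres_step[OF n] by blast
    with step.IH show ?case
      by (rule rtrancl_into_rtrancl)
  qed simp
  then show ?thesis
    using shift_word_words[OF n] by (simp add: pres_eq_def)
qed

lemma cyc_shift_pres_class:
  assumes n: "0 < n" and v: "v \<in> words {..<n}"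
  shows "cyc_shift n w a (pres_class {..<n} (cyc_rels n w) v) = pres_class {..<n} (cyc_rels n w) (shift_word n a v)"
proof -
  have "(\<Union>u\<in>pres_eq {..<n} (cyc_rels n w) `` {v}. pres_eq {..<n} (cyc_rels n w) `` {shift_word n a u})
      = pres_eq {..<n} (cyc_rels n w) `` {shift_word n a v}" (is "?lhs = ?rhs")
  proof
    show "?lhs \<subseteq> ?rhs"
      using shift_word_pres_eq[OF n] pres_eq_trans by blast
    have "v \<in> pres_eq {..<n} (cyc_rels n w) `` {v}"
      using v pres_eq_refl by auto
    then show "?rhs \<subseteq> ?lhs"
      by blast
  qed
  then show ?thesis
    by (simp add: cyc_shift_def pres_class_def)
qed

lemma cyc_carrierE:
  assumes "A \<in> carrier (cyc_group n w)"
  obtains v where "v \<in> words {..<n}" "A = pres_class {..<n} (cyc_rels n w) v"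
  using assms by (auto simp: cyc_group_def elim: pres_carrierE)

lemma cyc_mult:
  "u \<in> words {..<n} \<Longrightarrow> v \<in> words {..<n} \<Longrightarrow>
    pres_class {..<n} (cyc_rels n w) u \<otimes>\<^bsub>cyc_group n w\<^esub> pres_class {..<n} (cyc_rels n w) v
      = pres_class {..<n} (cyc_rels n w) (u @ v)"
  by (simp add: cyc_group_def pres_mult)

lemma cyc_shift_hom: "0 < n \<Longrightarrow> cyc_shift n w a \<in> hom (cyc_group n w) (cyc_group n w)"
  by (rule homI) (auto elim!: cyc_carrierE simp: cyc_shift_pres_class cyc_mult shift_word_words,
      simp add: cyc_group_def shift_word_words)

lemma cyc_shift_add:
  "0 < n \<Longrightarrow> x \<in> carrier (cyc_group n w) \<Longrightarrow> cyc_shift n w a (cyc_shift n w b x) = cyc_shift n w (a + b) x"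
  by (auto elim!: cyc_carrierE simp: cyc_shift_pres_class shift_word_words shift_word_shift_word add.commute)

lemma cyc_shift_zero: "0 < n \<Longrightarrow> x \<in> carrier (cyc_group n w) \<Longrightarrow> cyc_shift n w 0 x = x"
  by (auto elim!: cyc_carrierE simp: cyc_shift_pres_class shift_word_zero)

lemma cyc_shift_cyc_gen: "0 < n \<Longrightarrow> cyc_shift n w a (cyc_gen n w z) = cyc_gen n w (z + a)"
  by (simp add: cyc_gen_def pres_gen_def cyc_shift_pres_class idx_lt idx_idx_add)

lemma group_cyc_hnn: "0 < n \<Longrightarrow> group (cyc_hnn n w)"
  unfolding cyc_hnn_def by (rule group_semidirect_int[OF group_cyc_group cyc_shift_hom cyc_shift_add cyc_shift_zero])

section \<open>The HNN extension of \<open>H\<^sub>n(m,k)\<close> is the LOG group of \<open>\<Gamma>(n; (a\<^bsub>m-k+1\<^esub>)\<^sup>k)\<close>\<close>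

lemma (in group) word_eval_LOG_relator_iff:
  assumes "f l \<in> carrier G" "f s \<in> carrier G" "f r \<in> carrier G"
  shows "word_eval G f [(l, False), (s, True), (l, True), (r, False)] = \<one> \<longleftrightarrow> conjug G (f l) (f s) = f r"
proof -
  have "word_eval G f [(l, False), (s, True), (l, True), (r, False)] = conjug G (f l) (f s) \<otimes> inv (f r)"
    using assms by (simp add: conjug_def m_assoc)
  with assms show ?thesis
    by (simp add: mult_inv_eq_one_iff)
qed

locale hnn_LOG =
  fixes n m k :: nat
  assumes n: "0 < n" and k: "1 \<le> k"
begin

definition "wH = H_word n (int m) (int k)"

abbreviation "Hn \<equiv> cyc_group n wH"
abbreviation "HNN \<equiv> cyc_hnn n wH"

definition "x_gen = cyc_gen n wH"
definition "x_hnn z = (x_gen z, 0::int)"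
definition "t = (\<one>\<^bsub>Hn\<^esub>, 1::int)"

sublocale Hn: group Hn
  by (rule group_cyc_group)

sublocale HNN: group HNN
  using n by (rule group_cyc_hnn)

lemma HNN_mult: "(g, a) \<otimes>\<^bsub>HNN\<^esub> (h, b) = (g \<otimes>\<^bsub>Hn\<^esub> cyc_shift n wH a h, a + b)"
  by (simp add: cyc_hnn_def semidirect_int_def)

lemma HNN_one: "\<one>\<^bsub>HNN\<^esub> = (\<one>\<^bsub>Hn\<^esub>, 0)"
  by (simp add: cyc_hnn_def semidirect_int_def)

lemma HNN_carrier: "carrier HNN = carrier Hn \<times> UNIV"
  by (simp add: cyc_hnn_def semidirect_int_def)

lemma x_gen_closed [simp]: "x_gen z \<in> carrier Hn"
  using n by (simp add: x_gen_def)

lemma x_hnn_closed [simp]: "x_hnn z \<in> carrier HNN"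
  by (simp add: x_hnn_def HNN_carrier)

lemma t_closed [simp]: "t \<in> carrier HNN"
  by (simp add: t_def HNN_carrier)

lemma shift_one: "cyc_shift n wH a \<one>\<^bsub>Hn\<^esub> = \<one>\<^bsub>Hn\<^esub>"
  using cyc_shift_hom[OF n] by (simp add: group_hom.hom_one group_hom_def group_hom_axioms_def Hn.is_group)

lemma shift_zero: "g \<in> carrier Hn \<Longrightarrow> cyc_shift n wH 0 g = g"
  using n by (rule cyc_shift_zero)

lemma shift_closed: "g \<in> carrier Hn \<Longrightarrow> cyc_shift n wH a g \<in> carrier Hn"
  using cyc_shift_hom[OF n] by (auto simp: hom_def)

lemma shift_x_gen: "cyc_shift n wH a (x_gen z) = x_gen (z + a)"
  using n by (simp add: x_gen_def cyc_shift_cyc_gen)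

lemma x_hnn_eq: "z mod int n = z' mod int n \<Longrightarrow> x_hnn z = x_hnn z'"
  unfolding x_hnn_def x_gen_def by (metis periodic_eq periodic_cyc_gen)

lemma x_hnn_rel: "x_hnn a \<otimes>\<^bsub>HNN\<^esub> x_hnn (a + int m) = x_hnn (a + int k)"
proof -
  have "x_gen a \<otimes>\<^bsub>Hn\<^esub> x_gen (a + int m) = x_gen (a + int k)"
    using cyc_gen_H_relation[OF n] by (simp add: x_gen_def wH_def)
  then show ?thesis
    by (simp add: x_hnn_def HNN_mult shift_zero)
qed

lemma conjug_t_x_hnn: "conjug HNN t (x_hnn (z + 1)) = x_hnn z"
proof -
  have "t \<otimes>\<^bsub>HNN\<^esub> x_hnn z = x_hnn (z + 1) \<otimes>\<^bsub>HNN\<^esub> t"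
    by (simp add: t_def x_hnn_def HNN_mult shift_x_gen shift_one shift_zero)
  then show ?thesis
    by (simp add: HNN.conjug_eq_iff)
qed

lemma conjug_t_pow_x_hnn: "conjug HNN (t [^]\<^bsub>HNN\<^esub> (r::nat)) (x_hnn z) = x_hnn (z - int r)"
proof -
  have "conjug HNN t (x_hnn (- j)) = x_hnn (- (j + 1))" for j
    using conjug_t_x_hnn[of "- (j + 1)"] by simp
  then show ?thesis
    using HNN.conjug_nat_pow_shift[where f = "\<lambda>j. x_hnn (- j)" and T = t and j = "- z" and r = r] by simp
qed

lemma conjug_t_pow_t: "conjug HNN (t [^]\<^bsub>HNN\<^esub> (r::nat)) t = t"
proof -
  have "t \<otimes>\<^bsub>HNN\<^esub> t [^]\<^bsub>HNN\<^esub> r = t [^]\<^bsub>HNN\<^esub> r \<otimes>\<^bsub>HNN\<^esub> t"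
    by (simp add: HNN.nat_pow_Suc2[symmetric])
  then show ?thesis
    by (simp add: HNN.conjug_eq_iff)
qed

lemma t_nat_pow: "t [^]\<^bsub>HNN\<^esub> (r::nat) = (\<one>\<^bsub>Hn\<^esub>, int r)"
  by (induction r) (simp_all add: HNN_one t_def HNN_mult shift_one)

lemma t_int_pow: "t [^]\<^bsub>HNN\<^esub> (z::int) = (\<one>\<^bsub>Hn\<^esub>, z)"
proof (cases "z \<ge> 0")
  case True
  then obtain r where "z = int r"
    by (metis nonneg_eq_int)
  then show ?thesis
    by (simp add: int_pow_int t_nat_pow)
next
  case False
  then obtain r where z: "z = - int r"
    by (metis nonpos_int_cases linorder_linear)
  have "(\<one>\<^bsub>Hn\<^esub>, - int r) \<otimes>\<^bsub>HNN\<^esub> t [^]\<^bsub>HNN\<^esub> r = \<one>\<^bsub>HNN\<^esub>"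
    by (simp add: t_nat_pow HNN_mult shift_one HNN_one)
  then have "inv\<^bsub>HNN\<^esub> (t [^]\<^bsub>HNN\<^esub> r) = (\<one>\<^bsub>Hn\<^esub>, - int r)"
    by (intro HNN.inv_equality) (auto simp: HNN_carrier t_nat_pow)
  with z show ?thesis
    by (simp add: HNN.int_pow_neg_int)
qed

lemma HNN_decompose: "g \<in> carrier Hn \<Longrightarrow> (g, a) = (g, 0) \<otimes>\<^bsub>HNN\<^esub> t [^]\<^bsub>HNN\<^esub> a"
  by (simp add: t_int_pow HNN_mult shift_one)

lemma HNN_embedding_hom: "(\<lambda>g. (g, 0::int)) \<in> hom Hn HNN"
  by (rule homI) (simp_all add: HNN_carrier HNN_mult shift_zero)

definition "Verts = Gamma_V n k"
definition "Rels = {[(Gamma_label n (int m) (int k) e, False), (Gamma_init n e, True),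
    (Gamma_label n (int m) (int k) e, True), (Gamma_term n k e, False)] | e. e \<in> Gamma_E n k}"

abbreviation "LOG \<equiv> pres_group Verts Rels"

lemma Gamma_LOG_group_eq: "Gamma_LOG_group n (int m) k = LOG"
  by (simp add: Gamma_LOG_group_def LOG_group_def Verts_def Rels_def)

sublocale LOG: group LOG
  by (rule group_pres_group)

definition "a_gen j = pres_gen Verts Rels (Inl (idx n j))"
definition "t_gen j = pres_gen Verts Rels (Inr j)"
definition "t0 = t_gen 0"
definition "c = int m - int k + 1"
definition "A = a_gen c"

lemma Inl_in_Verts [simp]: "Inl i \<in> Verts \<longleftrightarrow> i < n"
  by (auto simp: Verts_def Gamma_V_def)

lemma Inr_in_Verts [simp]: "Inr j \<in> Verts \<longleftrightarrow> j < k"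
  by (auto simp: Verts_def Gamma_V_def)

lemma a_gen_closed [simp]: "a_gen j \<in> carrier LOG"
  using n by (simp add: a_gen_def idx_lt)

lemma t0_closed [simp]: "t0 \<in> carrier LOG"
  using k by (simp add: t0_def t_gen_def)

lemma A_closed [simp]: "A \<in> carrier LOG"
  by (simp add: A_def)

lemma a_gen_int: "i < n \<Longrightarrow> a_gen (int i) = pres_gen Verts Rels (Inl i)"
  by (simp add: a_gen_def idx_int)

lemma LOG_relation:
  assumes e: "e \<in> Gamma_E n k"
  shows "conjug LOG (pres_gen Verts Rels (Gamma_label n (int m) (int k) e)) (pres_gen Verts Rels (Gamma_init n e))
       = pres_gen Verts Rels (Gamma_term n k e)"
proof -
  let ?l = "Gamma_label n (int m) (int k) e" and ?s = "Gamma_init n e" and ?t = "Gamma_term n k e"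
  have verts: "?l \<in> Verts" "?s \<in> Verts" "?t \<in> Verts"
    using e k n by (auto simp: Gamma_E_def Gamma_label_def Gamma_init_def Gamma_term_def idx_lt)
  have "[(?l, False), (?s, True), (?l, True), (?t, False)] \<in> Rels"
    using e by (auto simp: Rels_def)
  then have "word_eval LOG (pres_gen Verts Rels) [(?l, False), (?s, True), (?l, True), (?t, False)] = \<one>\<^bsub>LOG\<^esub>"
    by (rule word_eval_relator) (use verts in simp)
  with verts show ?thesis
    using LOG.word_eval_LOG_relator_iff[of "pres_gen Verts Rels"] by simp
qed

lemma conjug_t0_a_gen: "conjug LOG t0 (a_gen j) = a_gen (j + 1)"
proof -
  have "Inl (idx n j) \<in> Gamma_E n k"
    using n by (simp add: Gamma_E_def idx_lt)
  from LOG_relation[OF this] show ?thesis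
    using n by (simp add: Gamma_label_def Gamma_init_def Gamma_term_def a_gen_def t0_def t_gen_def idx_idx_add)
qed

lemma conjug_A_t_gen: "j + 1 < k \<Longrightarrow> conjug LOG A (t_gen j) = t_gen (j + 1)"
proof -
  assume j: "j + 1 < k"
  then have "Inr j \<in> Gamma_E n k"
    by (simp add: Gamma_E_def)
  from LOG_relation[OF this] show ?thesis
    using j by (simp add: Gamma_label_def Gamma_init_def Gamma_term_def A_def a_gen_def t_gen_def c_def)
qed

lemma conjug_A_t_gen_last: "conjug LOG A (t_gen (k - 1)) = a_gen 1"
proof -
  have "Inr (k - 1) \<in> Gamma_E n k"
    using k by (simp add: Gamma_E_def)
  from LOG_relation[OF this] show ?thesis
    using k by (simp add: Gamma_label_def Gamma_init_def Gamma_term_def A_def a_gen_def t_gen_def c_def)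
qed

lemma t_gen_eq: "j < k \<Longrightarrow> t_gen j = conjug LOG (A [^]\<^bsub>LOG\<^esub> j) t0"
proof (induction j)
  case (Suc j)
  then have "t_gen (Suc j) = conjug LOG A (t_gen j)"
    using conjug_A_t_gen[of j] by simp
  with Suc show ?case
    by (simp add: LOG.conjug_conjug)
qed (use k in \<open>simp add: t0_def t_gen_def\<close>)

lemma a_gen_one_eq: "a_gen 1 = conjug LOG (A [^]\<^bsub>LOG\<^esub> k) t0"
proof -
  have "a_gen 1 = conjug LOG A (conjug LOG (A [^]\<^bsub>LOG\<^esub> (k - 1)) t0)"
    using conjug_A_t_gen_last t_gen_eq[of "k - 1"] k by simp
  also have "\<dots> = conjug LOG (A [^]\<^bsub>LOG\<^esub> Suc (k - 1)) t0"
    by (simp add: LOG.conjug_conjug)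
  finally show ?thesis
    using k by simp
qed

lemma conjug_t0_pow_a_gen: "conjug LOG (t0 [^]\<^bsub>LOG\<^esub> (z::int)) (a_gen j) = a_gen (j + z)"
  by (rule LOG.conjug_int_pow_shift[where f = a_gen, OF t0_closed a_gen_closed conjug_t0_a_gen])

lemma conjug_t0_pow_t0_pow: "conjug LOG (t0 [^]\<^bsub>LOG\<^esub> (z::int)) (t0 [^]\<^bsub>LOG\<^esub> (w::int)) = t0 [^]\<^bsub>LOG\<^esub> w"
proof -
  have "t0 [^]\<^bsub>LOG\<^esub> w \<otimes>\<^bsub>LOG\<^esub> t0 [^]\<^bsub>LOG\<^esub> z = t0 [^]\<^bsub>LOG\<^esub> z \<otimes>\<^bsub>LOG\<^esub> t0 [^]\<^bsub>LOG\<^esub> w"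
    by (simp add: LOG.int_pow_mult[symmetric] add.commute)
  then show ?thesis
    by (simp add: LOG.conjug_eq_iff)
qed

definition "a_pow j = a_gen j [^]\<^bsub>LOG\<^esub> k"
definition "t0_pow = t0 [^]\<^bsub>LOG\<^esub> k"
definition "x_LOG z = a_pow (int m - z) \<otimes>\<^bsub>LOG\<^esub> inv\<^bsub>LOG\<^esub> t0_pow"

lemma a_pow_closed [simp]: "a_pow j \<in> carrier LOG"
  by (simp add: a_pow_def)

lemma t0_pow_closed [simp]: "t0_pow \<in> carrier LOG"
  by (simp add: t0_pow_def)

lemma x_LOG_closed [simp]: "x_LOG z \<in> carrier LOG"
  by (simp add: x_LOG_def)

lemma inv_t0_pow: "inv\<^bsub>LOG\<^esub> t0_pow = t0 [^]\<^bsub>LOG\<^esub> (- int k)"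
  by (simp add: t0_pow_def LOG.int_pow_neg_int)

lemma conjug_t0_pow_a_pow: "conjug LOG (t0 [^]\<^bsub>LOG\<^esub> (z::int)) (a_pow j) = a_pow (j + z)"
  by (simp add: a_pow_def LOG.conjug_nat_pow conjug_t0_pow_a_gen)

lemma conjug_t0_pow_t0_pow_k: "conjug LOG (t0 [^]\<^bsub>LOG\<^esub> (z::int)) t0_pow = t0_pow"
  using conjug_t0_pow_t0_pow[of z "int k"] by (simp add: t0_pow_def int_pow_int)

lemma conjug_t0_pow_x_LOG: "conjug LOG (t0 [^]\<^bsub>LOG\<^esub> (s::int)) (x_LOG z) = x_LOG (z - s)"
  by (simp add: x_LOG_def LOG.conjug_mult LOG.conjug_inv conjug_t0_pow_a_pow conjug_t0_pow_t0_pow_k algebra_simps)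

lemma a_pow_rel: "a_pow (c + s) \<otimes>\<^bsub>LOG\<^esub> a_pow (1 + s) \<otimes>\<^bsub>LOG\<^esub> inv\<^bsub>LOG\<^esub> t0_pow = a_pow (c - int k + s)"
proof -
  have "conjug LOG (a_pow c) t0_pow = a_pow 1"
    by (simp add: a_pow_def t0_pow_def a_gen_one_eq LOG.conjug_nat_pow A_def)
  then have "t0_pow \<otimes>\<^bsub>LOG\<^esub> a_pow c = a_pow c \<otimes>\<^bsub>LOG\<^esub> a_pow 1"
    by (simp add: LOG.conjug_eq_iff)
  then have "a_pow c \<otimes>\<^bsub>LOG\<^esub> a_pow 1 \<otimes>\<^bsub>LOG\<^esub> inv\<^bsub>LOG\<^esub> t0_pow = conjug LOG (inv\<^bsub>LOG\<^esub> t0_pow) (a_pow c)"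
    by (simp add: conjug_def)
  also have "\<dots> = a_pow (c - int k)"
    by (simp add: inv_t0_pow conjug_t0_pow_a_pow)
  finally have "conjug LOG (t0 [^]\<^bsub>LOG\<^esub> s) (a_pow c \<otimes>\<^bsub>LOG\<^esub> a_pow 1 \<otimes>\<^bsub>LOG\<^esub> inv\<^bsub>LOG\<^esub> t0_pow)
      = a_pow (c - int k + s)"
    by (simp add: conjug_t0_pow_a_pow)
  then show ?thesis
    by (simp add: LOG.conjug_mult LOG.conjug_inv conjug_t0_pow_a_pow conjug_t0_pow_t0_pow_k)
qed

lemma x_LOG_rel: "x_LOG z \<otimes>\<^bsub>LOG\<^esub> x_LOG (z + int m) = x_LOG (z + int k)"
proof -
  have "conjug LOG t0_pow (a_pow (- z)) = a_pow (- z + int k)"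
    using conjug_t0_pow_a_pow[of "int k" "- z"] by (simp add: t0_pow_def int_pow_int)
  then have swap: "inv\<^bsub>LOG\<^esub> t0_pow \<otimes>\<^bsub>LOG\<^esub> a_pow (- z) = a_pow (- z + int k) \<otimes>\<^bsub>LOG\<^esub> inv\<^bsub>LOG\<^esub> t0_pow"
    by (simp add: conjug_def LOG.inv_solve_right)
  have "x_LOG z \<otimes>\<^bsub>LOG\<^esub> x_LOG (z + int m)
      = a_pow (int m - z) \<otimes>\<^bsub>LOG\<^esub> (inv\<^bsub>LOG\<^esub> t0_pow \<otimes>\<^bsub>LOG\<^esub> a_pow (- z)) \<otimes>\<^bsub>LOG\<^esub> inv\<^bsub>LOG\<^esub> t0_pow"
    by (simp add: x_LOG_def LOG.m_assoc)
  also have "\<dots> = a_pow (int m - z) \<otimes>\<^bsub>LOG\<^esub> a_pow (- z + int k) \<otimes>\<^bsub>LOG\<^esub> inv\<^bsub>LOG\<^esub> t0_pow \<otimes>\<^bsub>LOG\<^esub> inv\<^bsub>LOG\<^esub> t0_pow"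
    by (simp add: swap LOG.m_assoc)
  also have "a_pow (int m - z) \<otimes>\<^bsub>LOG\<^esub> a_pow (- z + int k) \<otimes>\<^bsub>LOG\<^esub> inv\<^bsub>LOG\<^esub> t0_pow = a_pow (int m - z - int k)"
    using a_pow_rel[of "int k - 1 - z"] by (simp add: c_def algebra_simps)
  also have "a_pow (int m - z - int k) \<otimes>\<^bsub>LOG\<^esub> inv\<^bsub>LOG\<^esub> t0_pow = x_LOG (z + int k)"
    by (simp add: x_LOG_def algebra_simps)
  finally show ?thesis .
qed

lemma periodic_x_LOG: "periodic n x_LOG"
proof -
  have "a_pow (int m - z mod int n) = a_pow (int m - z)" for z
    by (simp add: a_pow_def a_gen_def idx_def mod_diff_right_eq)
  then show ?thesis
    by (simp add: periodic_def x_LOG_def)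
qed

text \<open>\<open>\<Phi>\<close> sends \<open>a\<^sub>i \<mapsto> x\<^bsub>-i\<^esub>\<inverse> t x\<^bsub>-i\<^esub>\<close> and \<open>t\<^sub>j \<mapsto> B\<^sup>-\<^sup>j t B\<^sup>j\<close> with \<open>B = \<Phi>(a\<^bsub>m-k+1\<^esub>)\<close>;
  its inverse \<open>\<Psi>\<close> sends \<open>x\<^sub>z \<mapsto> a\<^bsub>m-z\<^esub>\<^sup>k t\<^sub>0\<^sup>-\<^sup>k\<close> and \<open>t \<mapsto> t\<^sub>0\<close>.\<close>

definition "a_hnn j = conjug HNN (x_hnn (- j)) t"
definition "B = a_hnn c"
definition "phi_gen v = (case v of Inl i \<Rightarrow> a_hnn (int i) | Inr j \<Rightarrow> conjug HNN (B [^]\<^bsub>HNN\<^esub> (j::nat)) t)"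

lemma a_hnn_closed [simp]: "a_hnn j \<in> carrier HNN"
  by (simp add: a_hnn_def)

lemma B_closed [simp]: "B \<in> carrier HNN"
  by (simp add: B_def)

lemma phi_gen_closed [simp]: "phi_gen v \<in> carrier HNN"
  by (simp add: phi_gen_def split: sum.split)

lemma a_hnn_idx: "a_hnn (int (idx n j)) = a_hnn j"
proof -
  have "x_hnn (- int (idx n j)) = x_hnn (- j)"
    by (rule x_hnn_eq) (simp add: int_idx[OF n] mod_simps)
  then show ?thesis
    by (simp add: a_hnn_def)
qed

lemma conjug_t_a_hnn: "conjug HNN t (a_hnn j) = a_hnn (j + 1)"
proof -
  have "conjug HNN t (x_hnn (- j)) = x_hnn (- j - 1)"
    using conjug_t_x_hnn[of "- j - 1"] by simp
  then have swap: "x_hnn (- j) \<otimes>\<^bsub>HNN\<^esub> t = t \<otimes>\<^bsub>HNN\<^esub> x_hnn (- j - 1)"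
    by (simp add: HNN.conjug_eq_iff)
  have "conjug HNN t (a_hnn j) = conjug HNN (x_hnn (- j) \<otimes>\<^bsub>HNN\<^esub> t) t"
    by (simp add: a_hnn_def HNN.conjug_conjug)
  also have "\<dots> = conjug HNN (x_hnn (- j - 1)) (conjug HNN t t)"
    using HNN.conjug_conjug[of "x_hnn (- j - 1)" t t] swap by simp
  also have "\<dots> = a_hnn (j + 1)"
    by (simp add: a_hnn_def)
  finally show ?thesis .
qed

lemma conjug_B_pow_k_t: "conjug HNN (B [^]\<^bsub>HNN\<^esub> k) t = a_hnn 1"
proof -
  have "B [^]\<^bsub>HNN\<^esub> k = conjug HNN (x_hnn (- c)) (t [^]\<^bsub>HNN\<^esub> k)"
    by (simp add: B_def a_hnn_def HNN.conjug_nat_pow)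
  then have "conjug HNN (B [^]\<^bsub>HNN\<^esub> k) t
      = conjug HNN (x_hnn (- c)) (conjug HNN (t [^]\<^bsub>HNN\<^esub> k) (conjug HNN (inv\<^bsub>HNN\<^esub> (x_hnn (- c))) t))"
    by (simp add: HNN.conjug_by_conjug)
  also have "conjug HNN (t [^]\<^bsub>HNN\<^esub> k) (conjug HNN (inv\<^bsub>HNN\<^esub> (x_hnn (- c))) t)
      = conjug HNN (inv\<^bsub>HNN\<^esub> (x_hnn (- c - int k))) t"
    by (simp add: HNN.conjug_conjug_distrib HNN.conjug_inv conjug_t_pow_x_hnn conjug_t_pow_t)
  also have "conjug HNN (x_hnn (- c)) (conjug HNN (inv\<^bsub>HNN\<^esub> (x_hnn (- c - int k))) t)
      = conjug HNN (inv\<^bsub>HNN\<^esub> (x_hnn (- c - int k)) \<otimes>\<^bsub>HNN\<^esub> x_hnn (- c)) t"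
    by (simp add: HNN.conjug_conjug)
  also have "inv\<^bsub>HNN\<^esub> (x_hnn (- c - int k)) \<otimes>\<^bsub>HNN\<^esub> x_hnn (- c) = x_hnn (- 1)"
    using x_hnn_rel[of "- c - int k"] by (simp add: c_def algebra_simps HNN.inv_solve_left')
  finally show ?thesis
    by (simp add: a_hnn_def)
qed

lemma phi_gen_rel:
  assumes e: "e \<in> Gamma_E n k"
  shows "conjug HNN (phi_gen (Gamma_label n (int m) (int k) e)) (phi_gen (Gamma_init n e)) = phi_gen (Gamma_term n k e)"
proof (cases e)
  case (Inl i)
  then show ?thesis
    using conjug_t_a_hnn[of "int i"] a_hnn_idx[of "int i + 1"]
    by (simp add: Gamma_label_def Gamma_init_def Gamma_term_def phi_gen_def add.commute)
next
  case (Inr j)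
  have label: "phi_gen (Gamma_label n (int m) (int k) e) = B"
    using Inr a_hnn_idx[of c] by (simp add: Gamma_label_def phi_gen_def B_def c_def)
  have step: "conjug HNN B (conjug HNN (B [^]\<^bsub>HNN\<^esub> j) t) = conjug HNN (B [^]\<^bsub>HNN\<^esub> Suc j) t"
    by (simp add: HNN.conjug_conjug)
  show ?thesis
  proof (cases "j + 1 < k")
    case True
    with Inr label step show ?thesis
      by (simp add: Gamma_init_def Gamma_term_def phi_gen_def)
  next
    case False
    with e Inr have "Suc j = k"
      by (auto simp: Gamma_E_def)
    with Inr label step show ?thesis
      using conjug_B_pow_k_t a_hnn_idx[of 1] by (simp add: Gamma_init_def Gamma_term_def phi_gen_def)
  qed
qed

definition "Phi = pres_lift HNN phi_gen"

lemma Phi_hom: "Phi \<in> hom LOG HNN"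
  and Phi_gen: "v \<in> Verts \<Longrightarrow> Phi (pres_gen Verts Rels v) = phi_gen v"
proof -
  have f: "phi_gen ` Verts \<subseteq> carrier HNN"
    by auto
  have rel: "word_eval HNN phi_gen r = \<one>\<^bsub>HNN\<^esub>" if "r \<in> Rels" "r \<in> words Verts" for r
  proof -
    from \<open>r \<in> Rels\<close> obtain e where "e \<in> Gamma_E n k" and r: "r = [(Gamma_label n (int m) (int k) e, False),
        (Gamma_init n e, True), (Gamma_label n (int m) (int k) e, True), (Gamma_term n k e, False)]"
      by (auto simp: Rels_def)
    then show ?thesis
      using phi_gen_rel HNN.word_eval_LOG_relator_iff[of phi_gen] by simp
  qed
  show "Phi \<in> hom LOG HNN"
    unfolding Phi_def by (rule pres_lift_hom[OF HNN.is_group f rel])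
  show "v \<in> Verts \<Longrightarrow> Phi (pres_gen Verts Rels v) = phi_gen v"
    unfolding Phi_def by (rule pres_lift_gen[OF HNN.is_group f rel])
qed

lemma Phi_a_gen: "Phi (a_gen j) = a_hnn j"
  using Phi_gen[of "Inl (idx n j)"] n a_hnn_idx by (simp add: a_gen_def phi_gen_def idx_lt)

lemma Phi_t0: "Phi t0 = t"
  using Phi_gen[of "Inr 0"] k by (simp add: t0_def t_gen_def phi_gen_def)

definition "psi = cyc_lift LOG x_LOG"

lemma psi_hom: "psi \<in> hom Hn LOG"
  and psi_x_gen: "psi (x_gen z) = x_LOG z"
  using cyc_lift[OF n LOG.is_group periodic_x_LOG x_LOG_closed LOG.H_relators_hold[OF n periodic_x_LOG x_LOG_closed x_LOG_rel]]
  unfolding psi_def x_gen_def wH_def by auto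

lemma psi_closed [simp]: "g \<in> carrier Hn \<Longrightarrow> psi g \<in> carrier LOG"
  using psi_hom by (rule hom_in_carrier)

lemma psi_cyc_shift: "g \<in> carrier Hn \<Longrightarrow> psi (cyc_shift n wH a g) = conjug LOG (t0 [^]\<^bsub>LOG\<^esub> (- a)) (psi g)"
  using cyc_hom_eqI[OF n LOG.is_group hom_compose[OF cyc_shift_hom[OF n] psi_hom]
      hom_compose[OF psi_hom LOG.conjug_hom[of "t0 [^]\<^bsub>LOG\<^esub> (- a)"]]]
  by (simp add: psi_x_gen shift_x_gen conjug_t0_pow_x_LOG flip: x_gen_def)

definition "Psi (x :: nat word set \<times> int) = psi (fst x) \<otimes>\<^bsub>LOG\<^esub> t0 [^]\<^bsub>LOG\<^esub> (snd x)"

lemma Psi_hom: "Psi \<in> hom HNN LOG"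
proof (rule homI)
  interpret psi: group_hom Hn LOG psi
    using psi_hom by (simp add: group_hom_def group_hom_axioms_def)
  show "Psi x \<in> carrier LOG" if "x \<in> carrier HNN" for x
    using that by (auto simp: Psi_def HNN_carrier)
  fix x y
  assume "x \<in> carrier HNN" "y \<in> carrier HNN"
  then obtain g a h b where x: "x = (g, a)" "g \<in> carrier Hn" and y: "y = (h, b)" "h \<in> carrier Hn"
    by (auto simp: HNN_carrier)
  then have "Psi (x \<otimes>\<^bsub>HNN\<^esub> y) = psi g \<otimes>\<^bsub>LOG\<^esub> conjug LOG (t0 [^]\<^bsub>LOG\<^esub> (- a)) (psi h) \<otimes>\<^bsub>LOG\<^esub> t0 [^]\<^bsub>LOG\<^esub> (a + b)"
    using shift_closed by (simp add: Psi_def HNN_mult psi_cyc_shift)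
  also have "\<dots> = Psi x \<otimes>\<^bsub>LOG\<^esub> Psi y"
    using x y by (simp add: Psi_def conjug_def LOG.m_assoc LOG.int_pow_mult LOG.int_pow_neg)
  finally show "Psi (x \<otimes>\<^bsub>HNN\<^esub> y) = Psi x \<otimes>\<^bsub>LOG\<^esub> Psi y" .
qed

interpretation Psi: group_hom HNN LOG Psi
  using Psi_hom by (simp add: group_hom_def group_hom_axioms_def)

interpretation Phi: group_hom LOG HNN Phi
  using Phi_hom by (simp add: group_hom_def group_hom_axioms_def)

lemma Psi_x_hnn: "Psi (x_hnn z) = x_LOG z"
  by (simp add: Psi_def x_hnn_def psi_x_gen)

lemma Psi_t: "Psi t = t0"
  using psi_hom by (simp add: Psi_def t_def hom_one LOG.is_group Hn.is_group)

lemma Psi_conjug: "g \<in> carrier HNN \<Longrightarrow> h \<in> carrier HNN \<Longrightarrow> Psi (conjug HNN g h) = conjug LOG (Psi g) (Psi h)"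
  by (simp add: conjug_def)

lemma Psi_a_hnn: "Psi (a_hnn j) = a_gen j"
proof -
  have "Psi (a_hnn j) = conjug LOG (x_LOG (- j)) t0"
    by (simp add: a_hnn_def Psi_conjug Psi_x_hnn Psi_t)
  also have "\<dots> = conjug LOG (t0 [^]\<^bsub>LOG\<^esub> (- int k)) (conjug LOG (a_pow (int m + j)) t0)"
    by (simp add: x_LOG_def LOG.conjug_conjug inv_t0_pow[symmetric])
  also have "\<dots> = conjug LOG (a_pow (int m + j - int k)) t0"
    by (simp add: LOG.conjug_conjug_distrib conjug_t0_pow_a_pow conjug_t0_pow_t0_pow[of _ 1, simplified])
  also have "\<dots> = conjug LOG (t0 [^]\<^bsub>LOG\<^esub> (j - 1)) (a_gen 1)"
    by (simp add: a_gen_one_eq LOG.conjug_conjug_distrib conjug_t0_pow_a_pow conjug_t0_pow_t0_pow[of _ 1, simplified]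
        a_pow_def[symmetric] A_def c_def algebra_simps)
  also have "\<dots> = a_gen j"
    by (simp add: conjug_t0_pow_a_gen)
  finally show ?thesis .
qed

lemma Psi_Phi_gen: "v \<in> Verts \<Longrightarrow> Psi (Phi (pres_gen Verts Rels v)) = pres_gen Verts Rels v"
proof (cases v)
  case (Inl i)
  moreover assume "v \<in> Verts"
  ultimately show ?thesis
    using Psi_a_hnn[of "int i"] Phi_gen by (simp add: phi_gen_def a_gen_int)
next
  case (Inr j)
  moreover assume "v \<in> Verts"
  moreover have "Psi B = A"
    by (simp add: B_def A_def Psi_a_hnn)
  ultimately have "Psi (Phi (pres_gen Verts Rels v)) = conjug LOG (A [^]\<^bsub>LOG\<^esub> j) t0"
    using Phi_gen by (simp add: phi_gen_def Psi_conjug Psi_t Psi.hom_nat_pow)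
  with \<open>v = Inr j\<close> \<open>v \<in> Verts\<close> show ?thesis
    using t_gen_eq[of j] by (simp add: t_gen_def)
qed

lemma Phi_psi: "g \<in> carrier Hn \<Longrightarrow> Phi (psi g) = (g, 0)"
proof (rule cyc_hom_eqI[OF n HNN.is_group hom_compose[OF psi_hom Phi_hom] HNN_embedding_hom, simplified])
  fix z
  have "conjug HNN (x_hnn (z - int m)) (t [^]\<^bsub>HNN\<^esub> k) = x_hnn z \<otimes>\<^bsub>HNN\<^esub> t [^]\<^bsub>HNN\<^esub> k"
    using conjug_t_pow_x_hnn[of k "z - int m + int k"] x_hnn_rel[of "z - int m"]
    by (simp add: HNN.conjug_eq_iff HNN.m_assoc[symmetric])
  moreover have "Phi (x_LOG z) = conjug HNN (x_hnn (z - int m)) (t [^]\<^bsub>HNN\<^esub> k) \<otimes>\<^bsub>HNN\<^esub> inv\<^bsub>HNN\<^esub> (t [^]\<^bsub>HNN\<^esub> k)"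
    by (simp add: x_LOG_def a_pow_def t0_pow_def Phi.hom_nat_pow Phi_a_gen Phi_t0 a_hnn_def HNN.conjug_nat_pow)
  ultimately have "Phi (x_LOG z) = x_hnn z"
    by (simp add: HNN.m_assoc)
  then show "Phi (psi (cyc_gen n wH z)) = (cyc_gen n wH z, 0)"
    by (simp add: psi_x_gen x_hnn_def flip: x_gen_def)
qed

theorem HNN_iso_LOG: "HNN \<cong> LOG"
proof (rule iso_by_inverse_homs[OF Psi_hom Phi_hom])
  fix x
  assume "x \<in> carrier HNN"
  then obtain g a where x: "x = (g, a)" "g \<in> carrier Hn"
    by (auto simp: HNN_carrier)
  then show "Phi (Psi x) = x"
    by (simp add: Psi_def Phi.hom_int_pow Phi_psi Phi_t0 HNN_decompose[symmetric])
next
  show "Psi (Phi y) = y" if "y \<in> carrier LOG" for y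
    using pres_hom_eqI[OF LOG.is_group hom_compose[OF Phi_hom Psi_hom] hom_id _ that] Psi_Phi_gen by simp
qed

end

theorem corollary3p4:
  fixes n m k p :: nat
  assumes "n \<ge> 2" and "1 \<le> m" and "m \<le> n" and "1 \<le> k" and "k \<le> n"
    and "p \<le> n - 1" and "int p mod int n = (int k - int m - 1) mod int n"
  shows "H_group n (int m) (int k) \<cong> L_group n (replicate k (int p))
       \<and> cyc_hnn n (H_word n (int m) (int k)) \<cong> Gamma_LOG_group n (int m) k"
proof
  have n: "0 < n"
    using assms(1) by simp
  show "H_group n (int m) (int k) \<cong> L_group n (replicate k (int p))"
    unfolding H_group_def L_group_def using H_group_iso_L_group[OF n assms(7)] .
  interpret hnn_LOG n m k
    using n assms(4) by unfold_locales
  show "cyc_hnn n (H_word n (int m) (int k)) \<cong> Gamma_LOG_group n (int m) k"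
    using HNN_iso_LOG by (simp add: Gamma_LOG_group_eq wH_def)
qed

end
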